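(* Assume the standing hypotheses (K), (F), (h), ($\theta$) of the context. Then: (1) There is $\varepsilon_0>0$ such that $\mathbf r\mapsto\mathcal F_{2\varepsilon}(\mathbf r)=F_1(r_1)+F_2(r_2)+2\varepsilon h(\mathbf r)$ is convex on $[0,\infty)^2$ for every $0<\varepsilon\le\varepsilon_0$, strictly convex if $\varepsilon<\varepsilon_0$. (2) For all $\mathbf r\in[0,\infty)^2$ and $0<\varepsilon\le\varepsilon_0$: $\tfrac12F_1(r_1)+\tfrac12F_2(r_2)\le\mathcal F_\varepsilon(\mathbf r)\le(1+\tfrac\varepsilon2\kappa_{1,1})F_1(r_1)+(1+\tfrac\varepsilon2\kappa_{2,2})F_2(r_2)$. (3) For $0\le r\le r_0$ and $j=1,2$: $\frac{m_j}{\beta_j+1}r^{\beta_j+1}\le F_j'(r)\le\frac{M_j}{\beta_j+1}r^{\beta_j+1}$ and $\frac{m_j}{(\beta_j+1)(\beta_j+2)}r^{\beta_j+2}\le F_j(r)\le\frac{M_j}{(\beta_j+1)(\beta_j+2)}r^{\beta_j+2}$. (4) For $j=1,2$ there are constants $\alpha_j$ such that $F_j'(r)\le\alpha_j(\min\{1,r\}+F_j(r))$ for all $r\ge0$. (5) For every $H>0$ there is $\beta_H>0$ such that for all $\bar{\mathbf r}\in[0,\infty)^2$ with $\bar r_1,\bar r_2\le H$, all $\mathbf r\in[0,\infty)^2$ and all $i,j\in\{1,2\}$, \[\max\{r_1,r_2\}\,|\theta_{j,i}(\mathbf u)-\theta_{j,i}(\bar{\mathbf u})|^2\le\beta_H\big(\mathrm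 d_{F_1}(r_1|\bar r_1)+\mathrm d_{F_2}(r_2|\bar r_2)\big),\] where $\mathbf u=(F_1'(r_1),F_2'(r_2))$, $\bar{\mathbf u}=(F_1'(\bar r_1),F_2'(\bar r_2))$ and $\mathrm d_F(r|\bar r):=F(r)-F(\bar r)-F'(\bar r)(r-\bar r)$ is the Bregman divergence of a convex function $F$.
   Context: Let $d\ge1$. Standing hypotheses. (K): $K:\mathbb R^d\to[0,\infty)$ is radially symmetric, $K(0)=0$, $K\in C^2$, $\nabla^2K\ge\lambda\,\mathrm{Id}$ for some $\lambda>0$, $\|\nabla^2K\|\le C_K$. (F): for $j=1,2$, $F_j:[0,\infty)\to[0,\infty)$ is $C^2$ with $F_j''(r)>0$ for $r>0$, $F_j(0)=F_j'(0)=0$, $\liminf_{r\to\infty}F_j''(r)>0$, $\limsup_{r\to\infty}F_j'(r)/F_j(r)<\infty$; there are $m_j,M_j>0$, $\beta_j\ge0$, $r_0>0$ with $m_jr^{\beta_j}\le F_j''(r)\le M_jr^{\beta_j}$ for $0\le r\le r_0$; and $F_j(r)-rF_j'(r)+r^2F_j''(r)\ge0$ for all $r\ge0$. (h): $h:[0,\infty)^2\to\mathbb R$ is $C^2$, and $h$ and $\partial_{r_1}h,\partial_{r_2}h$ vanish on $\{r_1=0\}\cup\{r_2=0\}$. Define for $\mathbf u\in[0,\infty)^2$: $\theta_j(\mathbf u):=\partial_{r_j}h((F_1')^{-1}(u_1),(F_2')^{-1}(u_2))$ and $\theta_{j,i}:=\partial_{u_i}\theta_j$, so $\theta_{j,i}(\mathbf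 u)=\partial_{r_i}\partial_{r_j}h(\mathbf r)/F_i''(r_i)$ with $r_k=(F_k')^{-1}(u_k)$. ($\theta$): each $\theta_{j,i}$ is locally Lipschitz on $[0,\infty)^2$, and there are $\kappa_{j,i}>0$ with $|\theta_{j,i}(\mathbf u)|\le\kappa_{j,i}\min\{1,u_1,u_2,\sqrt{(F_i')^{-1}(u_i)/(F_j')^{-1}(u_j)}\}$ for all $\mathbf u$. Notation: for $\varepsilon\ge0$, $\mathcal F_\varepsilon(\mathbf r):=F_1(r_1)+F_2(r_2)+\varepsilon h(\mathbf r)$. *)

theory Defs
  imports "HOL-Analysis.Analysis"
begin

definition quad :: "(real \<times> real) set" where
  "quad = {0..} \<times> {0..}"

definition strict_convex_on :: "'a::real_vector set \<Rightarrow> ('a \<Rightarrow> real) \<Rightarrow> bool" where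
  "strict_convex_on S f \<longleftrightarrow> convex S \<and>
     (\<forall>x\<in>S. \<forall>y\<in>S. \<forall>t::real. x \<noteq> y \<and> 0 < t \<and> t < 1 \<longrightarrow>
        f ((1 - t) *\<^sub>R x + t *\<^sub>R y) < (1 - t) * f x + t * f y)"

text \<open>Power r^b for r \<ge> 0, b \<ge> 0, with the convention 0^0 = 1
  (Isabelle's powr has 0 powr 0 = 0).\<close>
definition rpow :: "real \<Rightarrow> real \<Rightarrow> real" where
  "rpow r b = (if b = 0 then 1 else r powr b)"

definition coord :: "nat \<Rightarrow> real \<times> real \<Rightarrow> real" where
  "coord i u = (if i = 1 then fst u else snd u)"

definition upd_coord :: "nat \<Rightarrow> real \<times> real \<Rightarrow> real \<Rightarrow> real \<times> real" where
  "upd_coord i u t = (if i = 1 then (t, snd u) else (fst u, t))"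

text \<open>theta_j(u) = (partial_{r_j} h)((F_1')^{-1}(u_1), (F_2')^{-1}(u_2)), where dh j is
  partial_{r_j} h and Fd k is F_k'; the inverse is taken on [0,oo).\<close>
definition theta :: "(nat \<Rightarrow> real \<times> real \<Rightarrow> real) \<Rightarrow> (nat \<Rightarrow> real \<Rightarrow> real) \<Rightarrow> nat
    \<Rightarrow> real \<times> real \<Rightarrow> real" where
  "theta dh Fd j u = dh j (inv_into {0..} (Fd 1) (fst u), inv_into {0..} (Fd 2) (snd u))"

definition bregman :: "(real \<Rightarrow> real) \<Rightarrow> (real \<Rightarrow> real) \<Rightarrow> real \<Rightarrow> real \<Rightarrow> real" where
  "bregman F Fd r rb = F r - F rb - Fd rb * (r - rb)"

end

theory Submission
  imports Defs
begin

(*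
  Through the change of variables u_i = F_i'(r_i) the second derivatives of h factor as
  d_i d_j h = theta_{j,i} F_i'', so the hypotheses on theta bound the Hessian of h by that of
  F_1 + F_2: |d_j d_j h| <= kappa_{jj} F_j'' and, by symmetry of the mixed derivatives,
  (d_1 d_2 h)^2 <= kappa_{12} kappa_{21} F_1'' F_2''.  Hence the Hessian of F_{2 eps} is
  positive semidefinite for eps <= eps0 = 1 / (4 sum kappa), and for smaller eps the function
  F_{2 eps} is a convex combination of the strictly convex F_1 + F_2 and of F_{2 eps0}.
  Integrating the diagonal bound twice from the axis, where h and d_j h vanish, gives
  |h| <= kappa_{jj} F_j and thus the two-sided bounds on F_eps.  The bounds near 0 integrate
  those on F_j''; F_j' <= alpha_j (min 1 r + F_j) combines F_j' <= C r on compacts with the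
  bound on F_j'/F_j at infinity.  For the last estimate: on a compact box the theta_{j,i} are
  Lipschitz and |F'(r) - F'(rb)|^2 is bounded by the Bregman divergence because F'' is bounded
  there; far away F'' >= c makes the Bregman divergence grow quadratically, so that it
  dominates max r_i times the bounded factor |theta_{j,i}(u) - theta_{j,i}(ub)|^2.
*)

section \<open>Calculus in one variable\<close>

lemma DERIV_within_Icc_nonneg_imp_increasing:
  fixes f :: "real \<Rightarrow> real"
  assumes "a \<le> b"
    and deriv: "\<And>x. x \<in> {a..b} \<Longrightarrow> (f has_real_derivative f' x) (at x within {a..b})"
    and nonneg: "\<And>x. a < x \<Longrightarrow> x < b \<Longrightarrow> 0 \<le> f' x"
  shows "f a \<le> f b"
proof (rule DERIV_nonneg_imp_increasing_open[OF \<open>a \<le> b\<close>])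
  show "\<exists>y. (f has_real_derivative y) (at x) \<and> 0 \<le> y" if "a < x" "x < b" for x
    using deriv[of x] nonneg[of x] at_within_Icc_at[of a x b] that by auto
  show "continuous_on {a..b} f"
    using deriv by (metis DERIV_continuous continuous_on_eq_continuous_within)
qed

lemma DERIV2_nonneg_imp_above_tangent:
  fixes \<phi> :: "real \<Rightarrow> real"
  assumes "a \<le> b"
    and d1: "\<And>x. x \<in> {a..b} \<Longrightarrow> (\<phi> has_real_derivative \<phi>' x) (at x within {a..b})"
    and d2: "\<And>x. x \<in> {a..b} \<Longrightarrow> (\<phi>' has_real_derivative \<phi>'' x) (at x within {a..b})"
    and nonneg: "\<And>x. a < x \<Longrightarrow> x < b \<Longrightarrow> 0 \<le> \<phi>'' x"
  shows "\<phi> a + (b - a) * \<phi>' a \<le> \<phi> b"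
proof -
  have "\<phi>' a \<le> \<phi>' x" if x: "x \<in> {a..b}" for x
  proof (rule DERIV_within_Icc_nonneg_imp_increasing[where f = \<phi>' and f' = \<phi>''])
    show "(\<phi>' has_real_derivative \<phi>'' y) (at y within {a..x})" if "y \<in> {a..x}" for y
      using d2[of y] that x by (auto intro: has_field_derivative_subset)
  qed (use x nonneg in auto)
  then have "\<phi> a - (a - a) * \<phi>' a \<le> \<phi> b - (b - a) * \<phi>' a"
    by (intro DERIV_within_Icc_nonneg_imp_increasing[OF \<open>a \<le> b\<close>, where f' = "\<lambda>x. \<phi>' x - \<phi>' a"])
       (auto intro!: derivative_eq_intros d1)
  then show ?thesis by simp
qed

lemma DERIV_within_atLeast_MVT:
  fixes f :: "real \<Rightarrow> real"
  assumes deriv: "\<And>x. c \<le> x \<Longrightarrow> (f has_real_derivative f' x) (at x within {c..})"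
    and "c \<le> a" "a < b"
  shows "\<exists>\<xi>. a < \<xi> \<and> \<xi> < b \<and> f b - f a = (b - a) * f' \<xi>"
proof -
  have at: "(f has_real_derivative f' x) (at x)" if "a < x" for x
    using deriv[of x] that \<open>c \<le> a\<close> at_within_interior[of x "{c..}"] by auto
  have "continuous (at x within {a..b}) f" if "x \<in> {a..b}" for x
    using DERIV_continuous[OF deriv[of x]] that \<open>c \<le> a\<close>
    by (auto intro: continuous_within_subset)
  then have "continuous_on {a..b} f"
    by (simp add: continuous_on_eq_continuous_within)
  then obtain l \<xi> where "a < \<xi>" "\<xi> < b" "(f has_real_derivative l) (at \<xi>)" "f b - f a = (b - a) * l"
    using MVT[OF \<open>a < b\<close>] at by (meson real_differentiable_def)
  moreover from this have "l = f' \<xi>"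
    using at DERIV_unique by blast
  ultimately show ?thesis by blast
qed

lemma powr_bounds_if_deriv_powr_bounds:
  fixes g g' :: "real \<Rightarrow> real"
  assumes "0 \<le> p" "0 \<le> r" "g 0 = 0" "continuous_on {0..r} g"
    and deriv: "\<And>x. 0 < x \<Longrightarrow> x < r \<Longrightarrow> (g has_real_derivative g' x) (at x)"
    and bounds: "\<And>x. 0 < x \<Longrightarrow> x < r \<Longrightarrow> c * x powr p \<le> g' x \<and> g' x \<le> C * x powr p"
  shows "c / (p + 1) * r powr (p + 1) \<le> g r \<and> g r \<le> C / (p + 1) * r powr (p + 1)"
proof -
  have pow_deriv: "((\<lambda>x. a / (p + 1) * x powr (p + 1)) has_real_derivative a * x powr p) (at x)"
    if "0 < x" for a x
    using that \<open>0 \<le> p\<close> by (auto intro!: derivative_eq_intros)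
  have pow_cont: "continuous_on {0..r} (\<lambda>x. a / (p + 1) * x powr (p + 1))" for a
    using \<open>0 \<le> p\<close> by (intro continuous_intros continuous_on_powr') auto
  have "(\<lambda>x. g x - c / (p + 1) * x powr (p + 1)) 0 \<le> (\<lambda>x. g x - c / (p + 1) * x powr (p + 1)) r"
    using deriv bounds pow_deriv
    by (intro DERIV_nonneg_imp_increasing_open[OF \<open>0 \<le> r\<close>] continuous_intros pow_cont \<open>continuous_on {0..r} g\<close>)
      (force intro!: DERIV_diff)
  moreover have "(\<lambda>x. C / (p + 1) * x powr (p + 1) - g x) 0 \<le> (\<lambda>x. C / (p + 1) * x powr (p + 1) - g x) r"
    using deriv bounds pow_deriv
    by (intro DERIV_nonneg_imp_increasing_open[OF \<open>0 \<le> r\<close>] continuous_intros pow_cont \<open>continuous_on {0..r} g\<close>)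
      (force intro!: DERIV_diff)
  ultimately show ?thesis
    using \<open>g 0 = 0\<close> by simp
qed

section \<open>Convex profiles and their Bregman divergences\<close>

locale convex_profile =
  fixes f f' f'' :: "real \<Rightarrow> real"
  assumes f_deriv: "\<And>r. 0 \<le> r \<Longrightarrow> (f has_real_derivative f' r) (at r within {0..})"
    and f'_deriv: "\<And>r. 0 \<le> r \<Longrightarrow> (f' has_real_derivative f'' r) (at r within {0..})"
    and f''_cont: "continuous_on {0..} f''"
    and f''_pos: "\<And>r. 0 < r \<Longrightarrow> 0 < f'' r"
    and f_0: "f 0 = 0" and f'_0: "f' 0 = 0"
begin

lemma f'_strict_mono:
  assumes "0 \<le> a" "a < b"
  shows "f' a < f' b"
proof -
  obtain \<xi> where "a < \<xi>" "f' b - f' a = (b - a) * f'' \<xi>"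
    using DERIV_within_atLeast_MVT[OF f'_deriv assms] by blast
  moreover have "0 < (b - a) * f'' \<xi>"
    using f''_pos[of \<xi>] assms \<open>a < \<xi>\<close> by simp
  ultimately show ?thesis by simp
qed

lemma f'_mono: "0 \<le> a \<Longrightarrow> a \<le> b \<Longrightarrow> f' a \<le> f' b"
  using f'_strict_mono by (cases "a = b") (auto intro: less_imp_le)

lemma f'_pos: "0 < r \<Longrightarrow> 0 < f' r"
  using f'_strict_mono[of 0 r] f'_0 by simp

lemma f'_nonneg: "0 \<le> r \<Longrightarrow> 0 \<le> f' r"
  using f'_mono[of 0 r] f'_0 by simp

lemma f''_nonneg:
  assumes "0 \<le> r"
  shows "0 \<le> f'' r"
proof (rule continuous_ge_on_closure[of "{0<..}" f'' r])
  show "continuous_on (closure {0<..}) f''" "r \<in> closure {0<..}"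
    using f''_cont assms by auto
qed (use f''_pos in \<open>auto intro: less_imp_le\<close>)

lemma f_pos:
  assumes "0 < r"
  shows "0 < f r"
proof -
  obtain \<xi> where "0 < \<xi>" "f r - f 0 = (r - 0) * f' \<xi>"
    using DERIV_within_atLeast_MVT[OF f_deriv order_refl assms] by blast
  then show ?thesis
    using f'_pos[of \<xi>] f_0 assms by simp
qed

lemma f_nonneg: "0 \<le> r \<Longrightarrow> 0 \<le> f r"
  using f_pos f_0 by (cases "r = 0") (auto intro: less_imp_le)

lemma f_at: "0 < r \<Longrightarrow> (f has_real_derivative f' r) (at r)"
  using f_deriv[of r] at_within_interior[of r "{0..}"] by simp

lemma f'_at: "0 < r \<Longrightarrow> (f' has_real_derivative f'' r) (at r)"
  using f'_deriv[of r] at_within_interior[of r "{0..}"] by simp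

lemma f_cont: "continuous_on {0..} f"
  using f_deriv by (metis DERIV_continuous atLeast_iff continuous_on_eq_continuous_within)

lemma f'_cont: "continuous_on {0..} f'"
  using f'_deriv by (metis DERIV_continuous atLeast_iff continuous_on_eq_continuous_within)

lemma f_deriv_Icc: "0 \<le> a \<Longrightarrow> x \<in> {a..b} \<Longrightarrow> (f has_real_derivative f' x) (at x within {a..b})"
  using f_deriv[of x] by (auto intro: has_field_derivative_subset)

lemma f'_deriv_Icc: "0 \<le> a \<Longrightarrow> x \<in> {a..b} \<Longrightarrow> (f' has_real_derivative f'' x) (at x within {a..b})"
  using f'_deriv[of x] by (auto intro: has_field_derivative_subset)

lemma f''_bounded: "\<exists>B>0. \<forall>s\<in>{0..K}. f'' s \<le> B"
proof -
  have "bounded (f'' ` {0..K})"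
    by (intro compact_imp_bounded compact_continuous_image continuous_on_subset[OF f''_cont]) auto
  then obtain B where "0 < B" "\<forall>y\<in>f'' ` {0..K}. norm y \<le> B"
    by (auto simp: bounded_pos)
  then show ?thesis by force
qed

lemma f'_f_powr_bounds:
  assumes "0 \<le> \<beta>" "0 \<le> r" "r \<le> r0"
    and f''_bounds: "\<And>s. 0 \<le> s \<Longrightarrow> s \<le> r0 \<Longrightarrow> m * rpow s \<beta> \<le> f'' s \<and> f'' s \<le> M * rpow s \<beta>"
  shows "m / (\<beta> + 1) * r powr (\<beta> + 1) \<le> f' r \<and> f' r \<le> M / (\<beta> + 1) * r powr (\<beta> + 1) \<and>
    m / ((\<beta> + 1) * (\<beta> + 2)) * r powr (\<beta> + 2) \<le> f r \<and> f r \<le> M / ((\<beta> + 1) * (\<beta> + 2)) * r powr (\<beta> + 2)"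
proof -
  have f'_bounds: "m / (\<beta> + 1) * s powr (\<beta> + 1) \<le> f' s \<and> f' s \<le> M / (\<beta> + 1) * s powr (\<beta> + 1)"
    if "0 \<le> s" "s \<le> r0" for s
  proof (intro powr_bounds_if_deriv_powr_bounds[where g' = f''] continuous_on_subset[OF f'_cont] f'_at f'_0)
    show "m * x powr \<beta> \<le> f'' x \<and> f'' x \<le> M * x powr \<beta>" if "0 < x" "x < s" for x
      using f''_bounds[of x] that \<open>s \<le> r0\<close> by (cases "\<beta> = 0") (auto simp: rpow_def)
  qed (use that \<open>0 \<le> \<beta>\<close> in auto)
  have "m / (\<beta> + 1) / (\<beta> + 1 + 1) * r powr (\<beta> + 1 + 1) \<le> f r \<and>
      f r \<le> M / (\<beta> + 1) / (\<beta> + 1 + 1) * r powr (\<beta> + 1 + 1)"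
    by (rule powr_bounds_if_deriv_powr_bounds[where g' = f'])
      (use f'_bounds assms(2,3) \<open>0 \<le> \<beta>\<close> in \<open>auto intro: continuous_on_subset[OF f_cont] f_at f_0\<close>)
  moreover have "\<beta> + 1 + 1 = \<beta> + 2" by simp
  ultimately show ?thesis
    using f'_bounds[OF assms(2,3)] by (simp add: mult.commute)
qed

lemma f'_le_linear: "0 \<le> R \<Longrightarrow> \<exists>B>0. \<forall>r\<in>{0..R}. f' r \<le> B * r"
proof -
  obtain B where B: "0 < B" "\<And>s. s \<in> {0..R} \<Longrightarrow> f'' s \<le> B"
    using f''_bounded by blast
  have "f' r \<le> B * r" if r: "r \<in> {0..R}" for r
  proof (cases "r = 0")
    case False
    then have "0 < r" using r by simp
    then obtain \<xi> where "0 < \<xi>" "\<xi> < r" "f' r - f' 0 = (r - 0) * f'' \<xi>"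
      using DERIV_within_atLeast_MVT[OF f'_deriv order_refl] by blast
    moreover have "f'' \<xi> \<le> B"
      using B(2)[of \<xi>] \<open>0 < \<xi>\<close> \<open>\<xi> < r\<close> r by auto
    ultimately show ?thesis
      using f'_0 r by (simp add: mult.commute mult_left_mono)
  qed (simp add: f'_0)
  then show ?thesis using B(1) by blast
qed

lemma f'_le_min_plus_f:
  assumes "\<exists>C. eventually (\<lambda>r. f' r / f r \<le> C) at_top"
  shows "\<exists>\<alpha>. \<forall>r\<ge>0. f' r \<le> \<alpha> * (min 1 r + f r)"
proof -
  obtain C N where N: "\<And>r. N \<le> r \<Longrightarrow> f' r / f r \<le> C"
    using assms by (auto simp: eventually_at_top_linorder)
  define R where "R = max N 1"
  have "0 \<le> R" by (simp add: R_def le_max_iff_disj)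
  then obtain B where "0 < B" and linear: "\<forall>r\<in>{0..R}. f' r \<le> B * r"
    using f'_le_linear by blast
  have near: "f' r \<le> B * R * min 1 r" if "0 \<le> r" "r \<le> R" for r
  proof -
    have "f' r \<le> B * r"
      using linear that by simp
    also have "r \<le> R * min 1 r"
      using that mult_right_mono[of 1 R r] by (auto simp: R_def min_def)
    then have "B * r \<le> B * (R * min 1 r)"
      using \<open>0 < B\<close> by simp
    finally show ?thesis by simp
  qed
  have far: "f' r \<le> max C 0 * f r" if "R < r" for r
  proof -
    have "0 < f r" using f_pos that by (simp add: R_def)
    then have "f' r \<le> C * f r"
      using N[of r] that by (simp add: R_def divide_le_eq)
    also have "\<dots> \<le> max C 0 * f r"
      using \<open>0 < f r\<close> by (intro mult_right_mono) auto
    finally show ?thesis .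
  qed
  have "f' r \<le> (B * R + max C 0) * (min 1 r + f r)" if "0 \<le> r" for r
  proof -
    have "0 \<le> min 1 r" "0 \<le> f r" "0 \<le> B * R" using that f_nonneg \<open>0 < B\<close> by (auto simp: R_def)
    moreover from this have "B * R * min 1 r \<le> (B * R + max C 0) * (min 1 r + f r)"
      "max C 0 * f r \<le> (B * R + max C 0) * (min 1 r + f r)"
      by (auto intro!: mult_mono)
    ultimately show ?thesis
      using near[OF that] far[of r] by (cases "r \<le> R") (auto intro: order_trans)
  qed
  then show ?thesis by blast
qed

lemma bregman_pos:
  assumes "0 \<le> x" "0 \<le> z" "x \<noteq> z"
  shows "0 < bregman f f' x z"
proof (cases "z < x")
  case True
  then obtain \<xi> where "z < \<xi>" "f x - f z = (x - z) * f' \<xi>"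
    using DERIV_within_atLeast_MVT[OF f_deriv assms(2)] by blast
  moreover have "f' z < f' \<xi>"
    using f'_strict_mono assms(2) \<open>z < \<xi>\<close> by blast
  ultimately have "bregman f f' x z = (x - z) * (f' \<xi> - f' z)"
    by (simp add: bregman_def algebra_simps)
  also have "0 < \<dots>"
    using True \<open>f' z < f' \<xi>\<close> by simp
  finally show ?thesis .
next
  case False
  then have "x < z" using assms(3) by simp
  then obtain \<xi> where "\<xi> < z" "x < \<xi>" "f z - f x = (z - x) * f' \<xi>"
    using DERIV_within_atLeast_MVT[OF f_deriv assms(1)] by blast
  moreover have "f' \<xi> < f' z"
    using f'_strict_mono assms(1) \<open>x < \<xi>\<close> \<open>\<xi> < z\<close> by simp
  ultimately have "bregman f f' x z = (z - x) * (f' z - f' \<xi>)"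
    by (simp add: bregman_def algebra_simps)
  also have "0 < \<dots>"
    using \<open>x < z\<close> \<open>f' \<xi> < f' z\<close> by simp
  finally show ?thesis .
qed

lemma bregman_nonneg: "0 \<le> x \<Longrightarrow> 0 \<le> z \<Longrightarrow> 0 \<le> bregman f f' x z"
  using bregman_pos by (cases "x = z") (auto simp: bregman_def intro: less_imp_le)

lemma bregman_deriv_Icc:
  assumes "0 \<le> a" "s \<in> {a..b}"
  shows "((\<lambda>s. bregman f f' s z) has_real_derivative f' s - f' z) (at s within {a..b})"
  unfolding bregman_def using assms by (auto intro!: derivative_eq_intros f_deriv_Icc)

lemma f'_diff_sq_le_bregman: "\<exists>B>0. \<forall>r\<in>{0..K}. \<forall>z\<in>{0..K}. (f' r - f' z)\<^sup>2 \<le> B * bregman f f' r z"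
proof -
  obtain B where B: "0 < B" "\<And>s. s \<in> {0..K} \<Longrightarrow> f'' s \<le> B"
    using f''_bounded by blast
  have "(f' r - f' z)\<^sup>2 / (2 * B) \<le> bregman f f' r z" if rz: "r \<in> {0..K}" "z \<in> {0..K}" for r z
  proof -
    define \<psi> where "\<psi> s = bregman f f' s z - (f' s - f' z)\<^sup>2 / (2 * B)" for s
    define \<psi>' where "\<psi>' s = (f' s - f' z) * (1 - f'' s / B)" for s
    have deriv: "(\<psi> has_real_derivative \<psi>' s) (at s within {a..b})" if "0 \<le> a" "s \<in> {a..b}" for a b s
      unfolding \<psi>_def \<psi>'_def using that B(1)
      by (auto intro!: derivative_eq_intros bregman_deriv_Icc f'_deriv_Icc simp: field_simps)
    have factor_nonneg: "0 \<le> 1 - f'' s / B" if "s \<in> {0..K}" for s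
      using B that by simp
    \<comment> \<open>\<open>\<psi>'\<close> has the sign of \<open>s - z\<close>, so \<open>\<psi>\<close> is minimal at \<open>z\<close>, where it vanishes.\<close>
    have "\<psi> z \<le> \<psi> r"
    proof (cases "z \<le> r")
      case True
      show ?thesis
      proof (rule DERIV_within_Icc_nonneg_imp_increasing[OF True deriv])
        show "0 \<le> \<psi>' s" if "z < s" "s < r" for s
          using f'_mono[of z s] factor_nonneg[of s] that rz unfolding \<psi>'_def by simp
      qed (use rz in auto)
    next
      case False
      have "- \<psi> r \<le> - \<psi> z"
      proof (rule DERIV_within_Icc_nonneg_imp_increasing[where f = "\<lambda>s. - \<psi> s" and f' = "\<lambda>s. - \<psi>' s"])
        show "0 \<le> - \<psi>' s" if "r < s" "s < z" for s
          using f'_mono[of s z] factor_nonneg[of s] that rz unfolding \<psi>'_def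
          by (simp add: mult_nonpos_nonneg)
      qed (use False rz in \<open>auto intro!: DERIV_minus deriv\<close>)
      then show ?thesis by simp
    qed
    moreover have "\<psi> z = 0" by (simp add: \<psi>_def bregman_def)
    ultimately show ?thesis by (simp add: \<psi>_def)
  qed
  then show ?thesis
    using B(1) by (intro exI[of _ "2 * B"]) (auto simp: field_simps)
qed

lemma bregman_quadratic_growth:
  assumes c: "\<And>s. A \<le> s \<Longrightarrow> c \<le> f'' s" and "0 \<le> z" "z \<le> A" "A \<le> r"
  shows "c * (r - A)\<^sup>2 / 2 \<le> bregman f f' r z"
proof -
  let ?\<chi> = "\<lambda>s. bregman f f' s z - c * (s - A)\<^sup>2 / 2"
  have "0 \<le> A" using assms by linarith
  have "?\<chi> A + (r - A) * (f' A - f' z - c * (A - A)) \<le> ?\<chi> r"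
  proof (rule DERIV2_nonneg_imp_above_tangent[OF \<open>A \<le> r\<close>, where \<phi> = ?\<chi>
        and \<phi>' = "\<lambda>s. f' s - f' z - c * (s - A)" and \<phi>'' = "\<lambda>s. f'' s - c"])
    show "(?\<chi> has_real_derivative f' s - f' z - c * (s - A)) (at s within {A..r})" if "s \<in> {A..r}" for s
      using that \<open>0 \<le> A\<close> by (auto intro!: derivative_eq_intros bregman_deriv_Icc)
    show "((\<lambda>s. f' s - f' z - c * (s - A)) has_real_derivative f'' s - c) (at s within {A..r})"
      if "s \<in> {A..r}" for s
      using that \<open>0 \<le> A\<close> by (auto intro!: derivative_eq_intros f'_deriv_Icc)
    show "0 \<le> f'' s - c" if "A < s" "s < r" for s
      using c[of s] that by simp
  qed
  moreover have "0 \<le> bregman f f' A z" "0 \<le> (r - A) * (f' A - f' z)"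
    using bregman_nonneg f'_mono assms \<open>0 \<le> A\<close> by auto
  ultimately show ?thesis
    by simp
qed

lemma bregman_ge_far:
  assumes "\<exists>c>0. eventually (\<lambda>r. c \<le> f'' r) at_top" "0 \<le> H"
  shows "\<exists>K\<ge>H. \<forall>r z. K < r \<and> 0 \<le> z \<and> z \<le> H \<longrightarrow> r \<le> bregman f f' r z"
proof -
  obtain c N where c: "0 < c" "\<And>r. N \<le> r \<Longrightarrow> c \<le> f'' r"
    using assms(1) by (auto simp: eventually_at_top_linorder)
  define A where "A = max N H"
  have A: "0 \<le> A" "H \<le> A" "N \<le> A" using assms(2) by (auto simp: A_def)
  define K where "K = 2 * A + 8 / c"
  have "0 < 8 / c" using c(1) by simp
  have "r \<le> bregman f f' r z" if "K < r" "0 \<le> z" "z \<le> H" for r z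
  proof -
    have r: "2 * A \<le> r" "8 / c \<le> r" "0 \<le> r"
      using that A \<open>0 < 8 / c\<close> unfolding K_def by linarith+
    then have "r / 2 \<le> r - A" by simp
    then have "c * (r / 2)\<^sup>2 / 2 \<le> c * (r - A)\<^sup>2 / 2"
      using c(1) r by (simp add: power_mono)
    moreover have "r \<le> c * (r / 2)\<^sup>2 / 2"
      using r c(1) mult_right_mono[of "8 / c" r "c * r"] by (simp add: power2_eq_square field_simps)
    moreover have "c * (r - A)\<^sup>2 / 2 \<le> bregman f f' r z"
      using bregman_quadratic_growth[of A c z r] c(2) A that r by simp
    ultimately show ?thesis by linarith
  qed
  moreover have "H \<le> K"
    using A \<open>0 < 8 / c\<close> unfolding K_def by linarith
  ultimately show ?thesis by blast
qed

lemma inv_f'_f': "0 \<le> r \<Longrightarrow> inv_into {0..} f' (f' r) = r"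
  by (rule inv_into_f_f) (auto intro!: strict_mono_on_imp_inj_on simp: strict_mono_on_def f'_strict_mono)

lemma inv_f'_deriv:
  assumes "0 < r"
  shows "(inv_into {0..} f' has_real_derivative inverse (f'' r)) (at (f' r))"
proof (rule DERIV_inverse_function[where a = "f' (r / 2)" and b = "f' (r + 1)"])
  show "(f' has_real_derivative f'' r) (at (inv_into {0..} f' (f' r)))"
    using inv_f'_f' f'_at assms by simp
  show "f'' r \<noteq> 0"
    using f''_pos[OF assms] by simp
  show "f' (r / 2) < f' r" "f' r < f' (r + 1)"
    using f'_strict_mono assms by auto
  have cont: "continuous_on {r / 2..r + 1} f'"
    using continuous_on_subset[OF f'_cont] assms by auto
  show "f' (inv_into {0..} f' y) = y" if y: "f' (r / 2) < y" "y < f' (r + 1)" for y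
  proof -
    obtain x where "r / 2 \<le> x" "f' x = y"
      using IVT'[of f' "r / 2" y "r + 1"] y cont assms by auto
    then show ?thesis using inv_f'_f'[of x] assms by simp
  qed
  show "isCont (inv_into {0..} f') (f' r)"
  proof (rule isCont_inverse_function2[where a = "r / 2" and b = "r + 1" and f = f'])
    show "inv_into {0..} f' (f' x) = x" "isCont f' x" if "r / 2 \<le> x" "x \<le> r + 1" for x
      using inv_f'_f'[of x] f'_at[of x] DERIV_isCont that assms by auto
  qed (use assms in auto)
qed

end

section \<open>Convexity from tangent planes and Hessians\<close>

lemma has_real_derivative_along_line:
  assumes "(g has_derivative D) (at (p + s *\<^sub>R w) within S)"
    and "\<And>t. t \<in> T \<Longrightarrow> p + t *\<^sub>R w \<in> S"
  shows "((\<lambda>t. g (p + t *\<^sub>R w)) has_real_derivative D w) (at s within T)"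
proof -
  have "((\<lambda>t. p + t *\<^sub>R w) has_derivative (\<lambda>t. t *\<^sub>R w)) (at s within T)"
    by (auto intro!: derivative_eq_intros)
  moreover have "(g has_derivative D) (at (p + s *\<^sub>R w) within (\<lambda>t. p + t *\<^sub>R w) ` T)"
    using assms by (auto intro: has_derivative_subset)
  ultimately have "((\<lambda>t. g (p + t *\<^sub>R w)) has_derivative (\<lambda>t. D (t *\<^sub>R w))) (at s within T)"
    by (rule has_derivative_in_compose)
  then show ?thesis
    unfolding has_field_derivative_def
    by (rule has_derivative_eq_rhs)
      (simp add: fun_eq_iff linear_scale[OF has_derivative_linear[OF assms(1)]])
qed

lemma linear_tangent_combination:
  fixes D :: "'a::real_vector \<Rightarrow> real"
  assumes "linear D"
  shows "(1 - t) * D (x - ((1 - t) *\<^sub>R x + t *\<^sub>R y)) + t * D (y - ((1 - t) *\<^sub>R x + t *\<^sub>R y)) = 0"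
proof -
  have "(1 - t) *\<^sub>R (x - ((1 - t) *\<^sub>R x + t *\<^sub>R y)) + t *\<^sub>R (y - ((1 - t) *\<^sub>R x + t *\<^sub>R y)) = 0"
    by (simp add: algebra_simps)
  then show ?thesis
    using linear_add[OF assms] linear_scale[OF assms] linear_0[OF assms] by (metis real_scaleR_def)
qed

lemma convex_on_if_above_tangent:
  fixes f :: "'a::real_vector \<Rightarrow> real"
  assumes "convex S"
    and lin: "\<And>z. z \<in> S \<Longrightarrow> linear (D z)"
    and tangent: "\<And>x z. x \<in> S \<Longrightarrow> z \<in> S \<Longrightarrow> f z + D z (x - z) \<le> f x"
  shows "convex_on S f"
proof (rule convex_onI[OF _ \<open>convex S\<close>])
  fix t :: real and x y assume t: "0 < t" "t < 1" and xy: "x \<in> S" "y \<in> S"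
  define z where "z = (1 - t) *\<^sub>R x + t *\<^sub>R y"
  have "z \<in> S" using convexD_alt[OF \<open>convex S\<close> xy, of t] t by (simp add: z_def)
  then have "(1 - t) * (f z + D z (x - z)) + t * (f z + D z (y - z)) \<le> (1 - t) * f x + t * f y"
    using tangent xy t by (intro add_mono mult_left_mono) auto
  moreover have "(1 - t) * D z (x - z) + t * D z (y - z) = 0"
    unfolding z_def by (rule linear_tangent_combination[OF lin[OF \<open>z \<in> S\<close>[unfolded z_def]]])
  ultimately show "f ((1 - t) *\<^sub>R x + t *\<^sub>R y) \<le> (1 - t) * f x + t * f y"
    by (simp add: z_def algebra_simps)
qed

lemma strict_convex_on_if_above_tangent:
  fixes f :: "'a::real_vector \<Rightarrow> real"
  assumes "convex S"
    and lin: "\<And>z. z \<in> S \<Longrightarrow> linear (D z)"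
    and tangent: "\<And>x z. x \<in> S \<Longrightarrow> z \<in> S \<Longrightarrow> x \<noteq> z \<Longrightarrow> f z + D z (x - z) < f x"
  shows "strict_convex_on S f"
  unfolding strict_convex_on_def
proof (intro conjI ballI allI impI \<open>convex S\<close>)
  fix x y and t :: real assume xy: "x \<in> S" "y \<in> S" and t: "x \<noteq> y \<and> 0 < t \<and> t < 1"
  define z where "z = (1 - t) *\<^sub>R x + t *\<^sub>R y"
  have "z \<in> S" using convexD_alt[OF \<open>convex S\<close> xy, of t] t by (simp add: z_def)
  have "x - z = t *\<^sub>R (x - y)" "y - z = (1 - t) *\<^sub>R (y - x)"
    by (simp_all add: z_def algebra_simps)
  then have "x \<noteq> z" "y \<noteq> z"
    using t by auto
  then have "(1 - t) * (f z + D z (x - z)) < (1 - t) * f x" "t * (f z + D z (y - z)) < t * f y"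
    using tangent[OF xy(1) \<open>z \<in> S\<close>] tangent[OF xy(2) \<open>z \<in> S\<close>] t by simp_all
  moreover have "(1 - t) * D z (x - z) + t * D z (y - z) = 0"
    unfolding z_def by (rule linear_tangent_combination[OF lin[OF \<open>z \<in> S\<close>[unfolded z_def]]])
  ultimately show "f ((1 - t) *\<^sub>R x + t *\<^sub>R y) < (1 - t) * f x + t * f y"
    by (simp add: z_def algebra_simps)
qed

lemma strict_convex_on_add_convex_on:
  assumes "strict_convex_on S f" "convex_on S g"
  shows "strict_convex_on S (\<lambda>x. f x + g x)"
  unfolding strict_convex_on_def
proof (intro conjI ballI allI impI)
  show "convex S" using assms(1) by (simp add: strict_convex_on_def)
  fix x y and t :: real assume xy: "x \<in> S" "y \<in> S" and t: "x \<noteq> y \<and> 0 < t \<and> t < 1"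
  have "f ((1 - t) *\<^sub>R x + t *\<^sub>R y) < (1 - t) * f x + t * f y"
    using assms(1) xy t by (simp add: strict_convex_on_def)
  moreover have "g ((1 - t) *\<^sub>R x + t *\<^sub>R y) \<le> (1 - t) * g x + t * g y"
    using convex_onD[OF assms(2)] xy t by simp
  ultimately show "f ((1 - t) *\<^sub>R x + t *\<^sub>R y) + g ((1 - t) *\<^sub>R x + t *\<^sub>R y)
      < (1 - t) * (f x + g x) + t * (f y + g y)"
    by (simp add: algebra_simps)
qed

lemma strict_convex_on_cmul:
  assumes "0 < c" "strict_convex_on S f"
  shows "strict_convex_on S (\<lambda>x. c * f x)"
  unfolding strict_convex_on_def
proof (intro conjI ballI allI impI)
  show "convex S" using assms(2) by (simp add: strict_convex_on_def)
  fix x y and t :: real assume xy: "x \<in> S" "y \<in> S" and t: "x \<noteq> y \<and> 0 < t \<and> t < 1"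
  have "c * f ((1 - t) *\<^sub>R x + t *\<^sub>R y) < c * ((1 - t) * f x + t * f y)"
    using assms xy t by (simp add: strict_convex_on_def)
  then show "c * f ((1 - t) *\<^sub>R x + t *\<^sub>R y) < (1 - t) * (c * f x) + t * (c * f y)"
    by (simp add: algebra_simps)
qed

lemma quadratic_form_nonneg:
  fixes a b c v1 v2 :: real
  assumes "0 \<le> a" "0 \<le> b" "c\<^sup>2 \<le> a * b"
  shows "0 \<le> a * v1\<^sup>2 + 2 * c * v1 * v2 + b * v2\<^sup>2"
proof (cases "a = 0")
  case True
  then show ?thesis using assms by simp
next
  case False
  have "a * (a * v1\<^sup>2 + 2 * c * v1 * v2 + b * v2\<^sup>2) = (a * v1 + c * v2)\<^sup>2 + (a * b - c\<^sup>2) * v2\<^sup>2"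
    by (simp add: power2_eq_square algebra_simps)
  also have "0 \<le> \<dots>" using assms by simp
  finally show ?thesis
    using False assms(1) by (simp add: zero_le_mult_iff)
qed

lemma convex_on_if_hessian_nonneg:
  fixes f fx fy fxx fxy fyx fyy :: "real \<times> real \<Rightarrow> real"
  assumes "convex S"
    and df: "\<And>x. x \<in> S \<Longrightarrow> (f has_derivative (\<lambda>v. fx x * fst v + fy x * snd v)) (at x within S)"
    and dfx: "\<And>x. x \<in> S \<Longrightarrow> (fx has_derivative (\<lambda>v. fxx x * fst v + fxy x * snd v)) (at x within S)"
    and dfy: "\<And>x. x \<in> S \<Longrightarrow> (fy has_derivative (\<lambda>v. fyx x * fst v + fyy x * snd v)) (at x within S)"
    and psd: "\<And>x v. x \<in> S \<Longrightarrow>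
      0 \<le> fst v * (fxx x * fst v + fxy x * snd v) + snd v * (fyx x * fst v + fyy x * snd v)"
  shows "convex_on S f"
proof (rule convex_on_if_above_tangent[OF \<open>convex S\<close>])
  show "linear (\<lambda>v. fx z * fst v + fy z * snd v)" for z
    by (intro linearI) (auto simp: algebra_simps)
  fix x z assume "x \<in> S" "z \<in> S"
  let ?p = "\<lambda>t. z + t *\<^sub>R (x - z)"
  let ?v = "x - z"
  have p: "?p t \<in> S" if "t \<in> {0..1}" for t
    using convexD_alt[OF \<open>convex S\<close> \<open>z \<in> S\<close> \<open>x \<in> S\<close>, of t] that by (simp add: algebra_simps)
  have "f (?p 0) + (1 - 0) * (fx (?p 0) * fst ?v + fy (?p 0) * snd ?v) \<le> f (?p 1)"
  proof (rule DERIV2_nonneg_imp_above_tangent[where \<phi> = "\<lambda>t. f (?p t)"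
        and \<phi>' = "\<lambda>t. fx (?p t) * fst ?v + fy (?p t) * snd ?v"
        and \<phi>'' = "\<lambda>t. fst ?v * (fxx (?p t) * fst ?v + fxy (?p t) * snd ?v)
                      + snd ?v * (fyx (?p t) * fst ?v + fyy (?p t) * snd ?v)"])
    fix t :: real assume t: "t \<in> {0..1}"
    show "((\<lambda>t. f (?p t)) has_real_derivative fx (?p t) * fst ?v + fy (?p t) * snd ?v) (at t within {0..1})"
      using has_real_derivative_along_line[where T = "{0..1}", OF df[OF p[OF t]] p] by simp
    have "((\<lambda>t. fx (?p t)) has_real_derivative fxx (?p t) * fst ?v + fxy (?p t) * snd ?v) (at t within {0..1})"
      "((\<lambda>t. fy (?p t)) has_real_derivative fyx (?p t) * fst ?v + fyy (?p t) * snd ?v) (at t within {0..1})"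
      using has_real_derivative_along_line[where T = "{0..1}", OF dfx[OF p[OF t]] p]
        has_real_derivative_along_line[where T = "{0..1}", OF dfy[OF p[OF t]] p] by simp_all
    then show "((\<lambda>t. fx (?p t) * fst ?v + fy (?p t) * snd ?v) has_real_derivative
        fst ?v * (fxx (?p t) * fst ?v + fxy (?p t) * snd ?v)
        + snd ?v * (fyx (?p t) * fst ?v + fyy (?p t) * snd ?v)) (at t within {0..1})"
      by (auto intro!: derivative_eq_intros simp: algebra_simps)
  next
    fix t :: real assume "0 < t" "t < 1"
    then show "0 \<le> fst ?v * (fxx (?p t) * fst ?v + fxy (?p t) * snd ?v)
        + snd ?v * (fyx (?p t) * fst ?v + fyy (?p t) * snd ?v)"
      using psd[OF p, of t ?v] by simp
  qed simp
  then show "f z + (fx z * fst (x - z) + fy z * snd (x - z)) \<le> f x"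
    by simp
qed

section \<open>Symmetry of mixed partial derivatives\<close>

lemma second_difference_eq_mixed_derivative:
  fixes h :: "'a::real_normed_vector \<Rightarrow> real"
  assumes "0 < t"
    and box: "\<And>s r. 0 \<le> s \<Longrightarrow> s \<le> t \<Longrightarrow> 0 \<le> r \<Longrightarrow> r \<le> t \<Longrightarrow>
      x + s *\<^sub>R v + r *\<^sub>R w \<in> S"
    and dh: "\<And>y. y \<in> S \<Longrightarrow> (h has_derivative Dh y) (at y)"
    and dv: "\<And>y. y \<in> S \<Longrightarrow> ((\<lambda>y. Dh y v) has_derivative Dv y) (at y)"
  shows "\<exists>s r. 0 < s \<and> s < t \<and> 0 < r \<and> r < t \<and>
    h (x + t *\<^sub>R v + t *\<^sub>R w) - h (x + t *\<^sub>R v) - h (x + t *\<^sub>R w) + h x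
      = t * (t * Dv (x + s *\<^sub>R v + r *\<^sub>R w) w)"
proof -
  have along_v: "((\<lambda>s. h (x + r *\<^sub>R w + s *\<^sub>R v)) has_real_derivative Dh (x + s *\<^sub>R v + r *\<^sub>R w) v) (at s)"
    if "0 \<le> s" "s \<le> t" "0 \<le> r" "r \<le> t" for s r
  proof -
    have "(h has_derivative Dh (x + r *\<^sub>R w + s *\<^sub>R v)) (at (x + r *\<^sub>R w + s *\<^sub>R v) within UNIV)"
      using dh[of "x + r *\<^sub>R w + s *\<^sub>R v"] box[OF that] by (simp add: add_ac)
    from has_real_derivative_along_line[OF this, of UNIV] show ?thesis
      by (simp add: add_ac)
  qed
  have "((\<lambda>s. h (x + t *\<^sub>R w + s *\<^sub>R v) - h (x + 0 *\<^sub>R w + s *\<^sub>R v)) has_real_derivative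
      Dh (x + s *\<^sub>R v + t *\<^sub>R w) v - Dh (x + s *\<^sub>R v + 0 *\<^sub>R w) v) (at s)" if "0 \<le> s" "s \<le> t" for s
    using that \<open>0 < t\<close> by (intro DERIV_diff along_v) auto
  from MVT2[OF \<open>0 < t\<close> this] obtain s where s: "0 < s" "s < t"
    "h (x + t *\<^sub>R w + t *\<^sub>R v) - h (x + t *\<^sub>R v) - (h (x + t *\<^sub>R w) - h x)
      = t * (Dh (x + s *\<^sub>R v + t *\<^sub>R w) v - Dh (x + s *\<^sub>R v) v)"
    by auto
  have "((\<lambda>r. Dh (x + s *\<^sub>R v + r *\<^sub>R w) v) has_real_derivative Dv (x + s *\<^sub>R v + r *\<^sub>R w) w) (at r)"
    if "0 \<le> r" "r \<le> t" for r
    using has_real_derivative_along_line[OF dv[of "x + s *\<^sub>R v + r *\<^sub>R w"], of UNIV]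
      box[of s r] s that by simp
  from MVT2[OF \<open>0 < t\<close> this] obtain r where "0 < r" "r < t"
    "Dh (x + s *\<^sub>R v + t *\<^sub>R w) v - Dh (x + s *\<^sub>R v) v = t * Dv (x + s *\<^sub>R v + r *\<^sub>R w) w"
    by auto
  with s show ?thesis
    by (intro exI[of _ s] exI[of _ r]) (simp add: add_ac)
qed

lemma mixed_derivatives_agree_nearby:
  fixes h :: "'a::real_normed_vector \<Rightarrow> real"
  assumes "open S" "x \<in> S" "0 < \<delta>"
    and dh: "\<And>y. y \<in> S \<Longrightarrow> (h has_derivative Dh y) (at y)"
    and dv: "\<And>y. y \<in> S \<Longrightarrow> ((\<lambda>y. Dh y v) has_derivative Dv y) (at y)"
    and dw: "\<And>y. y \<in> S \<Longrightarrow> ((\<lambda>y. Dh y w) has_derivative Dw y) (at y)"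
  shows "\<exists>p q. dist p x < \<delta> \<and> dist q x < \<delta> \<and> Dv p w = Dw q v"
proof -
  obtain e where e: "0 < e" "ball x e \<subseteq> S"
    using \<open>open S\<close> \<open>x \<in> S\<close> open_contains_ball by blast
  define m where "m = min e \<delta>"
  define t where "t = m / (norm v + norm w + 1)"
  have "0 < m" using e(1) \<open>0 < \<delta>\<close> by (simp add: m_def)
  moreover have n: "0 < norm v + norm w + 1" by (simp add: add_nonneg_pos)
  ultimately have "0 < t" by (simp add: t_def)
  have near: "dist (x + s *\<^sub>R a + r *\<^sub>R b) x < m"
    if ab: "(a, b) \<in> {(v, w), (w, v)}" and "0 \<le> s" "s \<le> t" "0 \<le> r" "r \<le> t" for a b s r
  proof -
    have "dist (x + s *\<^sub>R a + r *\<^sub>R b) x \<le> s * norm a + r * norm b"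
      using norm_triangle_ineq[of "s *\<^sub>R a" "r *\<^sub>R b"] that by (simp add: dist_norm add.assoc)
    also have "\<dots> \<le> t * norm a + t * norm b"
      using that by (intro add_mono mult_right_mono) auto
    also have "\<dots> = t * (norm v + norm w)"
      using ab by (auto simp: algebra_simps)
    also have "\<dots> < t * (norm v + norm w + 1)"
      using \<open>0 < t\<close> by simp
    also have "\<dots> = m"
      using n by (simp add: t_def)
    finally show ?thesis .
  qed
  have in_S: "x + s *\<^sub>R a + r *\<^sub>R b \<in> S"
    if "(a, b) \<in> {(v, w), (w, v)}" "0 \<le> s" "s \<le> t" "0 \<le> r" "r \<le> t" for a b s r
    using near[OF that] e(2) by (auto simp: m_def dist_commute)
  obtain s r where p: "0 < s" "s < t" "0 < r" "r < t" and vw: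
    "h (x + t *\<^sub>R v + t *\<^sub>R w) - h (x + t *\<^sub>R v) - h (x + t *\<^sub>R w) + h x
      = t * (t * Dv (x + s *\<^sub>R v + r *\<^sub>R w) w)"
    using second_difference_eq_mixed_derivative[OF \<open>0 < t\<close> in_S[of v w] dh dv] by auto
  obtain s' r' where q: "0 < s'" "s' < t" "0 < r'" "r' < t" and wv:
    "h (x + t *\<^sub>R w + t *\<^sub>R v) - h (x + t *\<^sub>R w) - h (x + t *\<^sub>R v) + h x
      = t * (t * Dw (x + s' *\<^sub>R w + r' *\<^sub>R v) v)"
    using second_difference_eq_mixed_derivative[OF \<open>0 < t\<close> in_S[of w v] dh dw] by auto
  have "t * (t * Dv (x + s *\<^sub>R v + r *\<^sub>R w) w) = t * (t * Dw (x + s' *\<^sub>R w + r' *\<^sub>R v) v)"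
    using vw wv by (simp add: algebra_simps)
  then have "Dv (x + s *\<^sub>R v + r *\<^sub>R w) w = Dw (x + s' *\<^sub>R w + r' *\<^sub>R v) v"
    using \<open>0 < t\<close> by simp
  moreover have "dist (x + s *\<^sub>R v + r *\<^sub>R w) x < \<delta>" "dist (x + s' *\<^sub>R w + r' *\<^sub>R v) x < \<delta>"
    using near[of v w s r] near[of w v s' r'] p q by (simp_all add: m_def)
  ultimately show ?thesis by blast
qed

lemma mixed_derivatives_commute:
  fixes h :: "'a::real_normed_vector \<Rightarrow> real"
  assumes "open S" "x \<in> S"
    and dh: "\<And>y. y \<in> S \<Longrightarrow> (h has_derivative Dh y) (at y)"
    and dv: "\<And>y. y \<in> S \<Longrightarrow> ((\<lambda>y. Dh y v) has_derivative Dv y) (at y)"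
    and dw: "\<And>y. y \<in> S \<Longrightarrow> ((\<lambda>y. Dh y w) has_derivative Dw y) (at y)"
    and cont: "isCont (\<lambda>y. Dv y w) x" "isCont (\<lambda>y. Dw y v) x"
  shows "Dv x w = Dw x v"
proof (rule ccontr)
  assume "Dv x w \<noteq> Dw x v"
  define d where "d = \<bar>Dv x w - Dw x v\<bar> / 2"
  have "0 < d" using \<open>Dv x w \<noteq> Dw x v\<close> by (simp add: d_def)
  obtain \<delta>v where \<delta>v: "0 < \<delta>v" "\<And>y. dist y x < \<delta>v \<Longrightarrow> dist (Dv y w) (Dv x w) < d"
    using cont(1) \<open>0 < d\<close> unfolding continuous_at_eps_delta by blast
  obtain \<delta>w where \<delta>w: "0 < \<delta>w" "\<And>y. dist y x < \<delta>w \<Longrightarrow> dist (Dw y v) (Dw x v) < d"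
    using cont(2) \<open>0 < d\<close> unfolding continuous_at_eps_delta by blast
  obtain p q where "dist p x < min \<delta>v \<delta>w" "dist q x < min \<delta>v \<delta>w" "Dv p w = Dw q v"
    using mixed_derivatives_agree_nearby[OF assms(1,2) _ dh dv dw, of "min \<delta>v \<delta>w"] \<delta>v(1) \<delta>w(1) by auto
  with \<delta>v(2)[of p] \<delta>w(2)[of q] show False
    unfolding d_def dist_real_def by (simp add: abs_if split: if_splits)
qed

lemma mem_quad_iff: "r \<in> quad \<longleftrightarrow> 0 \<le> fst r \<and> 0 \<le> snd r"
  by (cases r) (simp add: quad_def)

lemma convex_quad: "convex quad"
  unfolding quad_def by (intro convex_Times convex_real_interval)

lemma interior_quad: "interior quad = {0<..} \<times> {0<..}"
  by (simp add: interior_Times quad_def)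

lemma nonneg_on_quad_if_nonneg_on_interior:
  fixes g :: "real \<times> real \<Rightarrow> real"
  assumes "continuous_on quad g" "\<And>a b. 0 < a \<Longrightarrow> 0 < b \<Longrightarrow> 0 \<le> g (a, b)" "r \<in> quad"
  shows "0 \<le> g r"
proof (rule continuous_ge_on_closure[of "{0<..} \<times> {0<..}" g r])
  have "closure ({0<..} \<times> {0<..}) = quad"
    by (simp add: closure_Times quad_def)
  then show "continuous_on (closure ({0<..} \<times> {0<..})) g" "r \<in> closure ({0<..} \<times> {0<..})"
    using assms(1,3) by simp_all
qed (use assms(2) in auto)

lemma coord_upd_coord [simp]: "coord j (upd_coord j r t) = t"
  by (simp add: coord_def upd_coord_def)

lemma upd_coord_coord [simp]: "upd_coord j r (coord j r) = r"
  by (simp add: coord_def upd_coord_def)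

lemma upd_coord_0_on_axis: "fst (upd_coord j r 0) = 0 \<or> snd (upd_coord j r 0) = 0"
  by (simp add: upd_coord_def)

lemma coord_mem_quad: "j \<in> {1, 2} \<Longrightarrow> r \<in> quad \<Longrightarrow> 0 \<le> coord j r"
  by (auto simp: coord_def mem_quad_iff)

lemma upd_coord_mem_quad: "j \<in> {1, 2} \<Longrightarrow> r \<in> quad \<Longrightarrow> 0 \<le> t \<Longrightarrow> upd_coord j r t \<in> quad"
  by (auto simp: upd_coord_def mem_quad_iff)

lemma index_cases:
  assumes "j \<in> {1, 2}"
  obtains "j = 1" | "j = 2"
  using assms by blast

lemma has_derivative_fst_compose:
  assumes "(f has_real_derivative D) (at (fst x) within A)" "fst ` S \<subseteq> A"
  shows "((\<lambda>x. f (fst x)) has_derivative (\<lambda>v. D * fst v)) (at x within S)"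
  using has_derivative_in_compose[OF has_derivative_fst[OF has_derivative_ident]
      has_derivative_subset[OF assms(1)[unfolded has_field_derivative_def] assms(2)]] by simp

lemma has_derivative_snd_compose:
  assumes "(f has_real_derivative D) (at (snd x) within A)" "snd ` S \<subseteq> A"
  shows "((\<lambda>x. f (snd x)) has_derivative (\<lambda>v. D * snd v)) (at x within S)"
  using has_derivative_in_compose[OF has_derivative_snd[OF has_derivative_ident]
      has_derivative_subset[OF assms(1)[unfolded has_field_derivative_def] assms(2)]] by simp

lemma has_real_derivative_upd_coord:
  fixes g :: "real \<times> real \<Rightarrow> real"
  assumes "i \<in> {1, 2}"
    and "(g has_derivative (\<lambda>v. a1 * fst v + a2 * snd v)) (at (upd_coord i r s) within S)"
    and "\<And>t. t \<in> T \<Longrightarrow> upd_coord i r t \<in> S"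
  shows "((\<lambda>t. g (upd_coord i r t)) has_real_derivative (if i = 1 then a1 else a2)) (at s within T)"
proof -
  define p e where "p = upd_coord i r 0" and "e = upd_coord i (0, 0) 1"
  have line: "upd_coord i r t = p + t *\<^sub>R e" for t
    using assms(1) by (auto simp: p_def e_def upd_coord_def)
  have "((\<lambda>t. g (p + t *\<^sub>R e)) has_real_derivative a1 * fst e + a2 * snd e) (at s within T)"
    using assms(2,3) by (intro has_real_derivative_along_line) (simp_all add: line)
  moreover have "a1 * fst e + a2 * snd e = (if i = 1 then a1 else a2)"
    by (simp add: e_def upd_coord_def)
  ultimately show ?thesis
    unfolding line by simp
qed

lemma uniform_lipschitz_on_compact:
  fixes \<theta> :: "'i \<Rightarrow> 'a::metric_space \<Rightarrow> 'b::metric_space"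
  assumes "finite I" "compact X"
    and loclip: "\<And>k x. k \<in> I \<Longrightarrow> x \<in> X \<Longrightarrow> \<exists>e>0. \<exists>L. L-lipschitz_on (cball x e \<inter> X) (\<theta> k)"
  shows "\<exists>L. \<forall>k\<in>I. L-lipschitz_on X (\<theta> k)"
proof -
  have "\<exists>L. L-lipschitz_on X (\<theta> k)" if "k \<in> I" for k
  proof -
    \<comment> \<open>The library's local Lipschitz notion carries a time parameter; a single time suffices.\<close>
    have "local_lipschitz {0::real} X (\<lambda>_. \<theta> k)"
      using loclip[OF that] by (intro local_lipschitzI) blast
    then show ?thesis
      by (rule local_lipschitz_compact_implies_lipschitz[OF _ \<open>compact X\<close> compact_sing]) auto
  qed
  then obtain L where L: "\<And>k. k \<in> I \<Longrightarrow> (L k)-lipschitz_on X (\<theta> k)"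
    by metis
  have "L k \<le> Max (insert 0 (L ` I))" if "k \<in> I" for k
    using \<open>finite I\<close> that by (intro Max_ge) auto
  then show ?thesis
    using L lipschitz_on_le by blast
qed

locale profile_pair = P1: convex_profile f1 f1' f1'' + P2: convex_profile f2 f2' f2''
  for f1 f1' f1'' f2 f2' f2'' :: "real \<Rightarrow> real"
begin

definition grad :: "real \<times> real \<Rightarrow> real \<times> real" where
  "grad r = (f1' (fst r), f2' (snd r))"

definition breg :: "real \<times> real \<Rightarrow> real \<times> real \<Rightarrow> real" where
  "breg r z = bregman f1 f1' (fst r) (fst z) + bregman f2 f2' (snd r) (snd z)"

lemma breg_nonneg: "r \<in> quad \<Longrightarrow> z \<in> quad \<Longrightarrow> 0 \<le> breg r z"
  by (simp add: breg_def mem_quad_iff P1.bregman_nonneg P2.bregman_nonneg)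

lemma grad_mem_quad: "r \<in> quad \<Longrightarrow> grad r \<in> quad"
  by (simp add: grad_def mem_quad_iff P1.f'_nonneg P2.f'_nonneg)

lemma strict_convex_on_sum: "strict_convex_on quad (\<lambda>r. f1 (fst r) + f2 (snd r))"
proof (rule strict_convex_on_if_above_tangent[where D = "\<lambda>z v. f1' (fst z) * fst v + f2' (snd z) * snd v"])
  show "convex quad"
    by (rule convex_quad)
  show "linear (\<lambda>v. f1' (fst z) * fst v + f2' (snd z) * snd v)" for z
    by (intro linearI) (auto simp: algebra_simps)
  fix x z assume "x \<in> quad" "z \<in> quad" "x \<noteq> z"
  then have "0 < breg x z"
    using P1.bregman_pos[of "fst x" "fst z"] P2.bregman_pos[of "snd x" "snd z"] breg_nonneg
      P1.bregman_nonneg P2.bregman_nonneg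
    by (cases "fst x = fst z") (auto simp: breg_def mem_quad_iff prod_eq_iff add_pos_nonneg add_nonneg_pos)
  then show "f1 (fst z) + f2 (snd z) + (f1' (fst z) * fst (x - z) + f2' (snd z) * snd (x - z))
      < f1 (fst x) + f2 (snd x)"
    by (simp add: breg_def bregman_def algebra_simps)
qed

lemma dist_grad_sq_le_breg:
  "\<exists>B>0. \<forall>r\<in>{0..K} \<times> {0..K}. \<forall>z\<in>{0..K} \<times> {0..K}. (dist (grad r) (grad z))\<^sup>2 \<le> B * breg r z"
proof -
  obtain B1 where B1: "0 < B1" "\<forall>r\<in>{0..K}. \<forall>z\<in>{0..K}. (f1' r - f1' z)\<^sup>2 \<le> B1 * bregman f1 f1' r z"
    using P1.f'_diff_sq_le_bregman by blast
  obtain B2 where B2: "0 < B2" "\<forall>r\<in>{0..K}. \<forall>z\<in>{0..K}. (f2' r - f2' z)\<^sup>2 \<le> B2 * bregman f2 f2' r z"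
    using P2.f'_diff_sq_le_bregman by blast
  have "(dist (grad r) (grad z))\<^sup>2 \<le> max B1 B2 * breg r z"
    if "r \<in> {0..K} \<times> {0..K}" "z \<in> {0..K} \<times> {0..K}" for r z
  proof -
    have "(dist (grad r) (grad z))\<^sup>2 = (f1' (fst r) - f1' (fst z))\<^sup>2 + (f2' (snd r) - f2' (snd z))\<^sup>2"
      by (simp add: grad_def dist_Pair_Pair dist_real_def)
    also have "\<dots> \<le> B1 * bregman f1 f1' (fst r) (fst z) + B2 * bregman f2 f2' (snd r) (snd z)"
      using B1(2) B2(2) that by (intro add_mono) auto
    also have "\<dots> \<le> max B1 B2 * bregman f1 f1' (fst r) (fst z) + max B1 B2 * bregman f2 f2' (snd r) (snd z)"
      using that P1.bregman_nonneg P2.bregman_nonneg by (intro add_mono mult_right_mono) auto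
    finally show ?thesis by (simp add: breg_def distrib_left)
  qed
  then show ?thesis
    using B1(1) by (intro exI[of _ "max B1 B2"]) auto
qed

lemma max_le_breg_far:
  assumes "\<exists>c>0. eventually (\<lambda>r. c \<le> f1'' r) at_top" "\<exists>c>0. eventually (\<lambda>r. c \<le> f2'' r) at_top"
    and "0 \<le> H"
  shows "\<exists>K\<ge>H. \<forall>r\<in>quad. \<forall>z\<in>quad. fst z \<le> H \<and> snd z \<le> H \<and> K < max (fst r) (snd r) \<longrightarrow>
    max (fst r) (snd r) \<le> breg r z"
proof -
  obtain K1 where K1: "H \<le> K1" "\<forall>r z. K1 < r \<and> 0 \<le> z \<and> z \<le> H \<longrightarrow> r \<le> bregman f1 f1' r z"
    using P1.bregman_ge_far[OF assms(1,3)] by blast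
  obtain K2 where K2: "H \<le> K2" "\<forall>r z. K2 < r \<and> 0 \<le> z \<and> z \<le> H \<longrightarrow> r \<le> bregman f2 f2' r z"
    using P2.bregman_ge_far[OF assms(2,3)] by blast
  have "max (fst r) (snd r) \<le> breg r z"
    if "r \<in> quad" "z \<in> quad" "fst z \<le> H" "snd z \<le> H" "max K1 K2 < max (fst r) (snd r)" for r z
    using K1(2)[rule_format, of "fst r" "fst z"] K2(2)[rule_format, of "snd r" "snd z"] that
      P1.bregman_nonneg[of "fst r" "fst z"] P2.bregman_nonneg[of "snd r" "snd z"]
    by (auto simp: breg_def mem_quad_iff max_def split: if_splits)
  then show ?thesis
    using K1(1) by (intro exI[of _ "max K1 K2"]) auto
qed

lemma continuous_on_grad: "continuous_on quad grad"
  unfolding grad_def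
  by (intro continuous_on_Pair continuous_on_compose2[OF P1.f'_cont continuous_on_fst]
      continuous_on_compose2[OF P2.f'_cont continuous_on_snd]) (auto simp: mem_quad_iff)

lemma weighted_difference_le_breg_explicit:
  assumes "0 \<le> H" "H \<le> K" "0 < B"
    and far: "\<forall>r\<in>quad. \<forall>z\<in>quad. fst z \<le> H \<and> snd z \<le> H \<and> K < max (fst r) (snd r) \<longrightarrow>
      max (fst r) (snd r) \<le> breg r z"
    and near: "\<forall>r\<in>{0..K} \<times> {0..K}. \<forall>z\<in>{0..K} \<times> {0..K}. (dist (grad r) (grad z))\<^sup>2 \<le> B * breg r z"
    and lip: "L-lipschitz_on (grad ` ({0..K} \<times> {0..K})) \<theta>"
    and bounded: "\<And>u. u \<in> quad \<Longrightarrow> \<bar>\<theta> u\<bar> \<le> C"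
    and r: "r \<in> quad" and z: "z \<in> quad" "fst z \<le> H" "snd z \<le> H"
  shows "max (fst r) (snd r) * (\<theta> (grad r) - \<theta> (grad z))\<^sup>2 \<le> (K * L\<^sup>2 * B + 4 * C\<^sup>2 + 1) * breg r z"
proof (cases "max (fst r) (snd r) \<le> K")
  case True
  then have "r \<in> {0..K} \<times> {0..K}" "z \<in> {0..K} \<times> {0..K}"
    using r z \<open>H \<le> K\<close> by (auto simp: mem_quad_iff mem_Times_iff)
  then have "\<bar>\<theta> (grad r) - \<theta> (grad z)\<bar> \<le> L * dist (grad r) (grad z)"
    using lipschitz_onD[OF lip] by (simp add: dist_real_def)
  then have "\<bar>\<theta> (grad r) - \<theta> (grad z)\<bar>\<^sup>2 \<le> (L * dist (grad r) (grad z))\<^sup>2"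
    by (rule power_mono) simp
  also have "\<dots> = L\<^sup>2 * (dist (grad r) (grad z))\<^sup>2"
    by (simp add: power_mult_distrib)
  also have "\<dots> \<le> L\<^sup>2 * (B * breg r z)"
    by (rule mult_left_mono[OF near[rule_format, OF \<open>r \<in> {0..K} \<times> {0..K}\<close> \<open>z \<in> {0..K} \<times> {0..K}\<close>]])
      simp
  finally have "max (fst r) (snd r) * (\<theta> (grad r) - \<theta> (grad z))\<^sup>2 \<le> K * (L\<^sup>2 * (B * breg r z))"
    using True r by (intro mult_mono) (auto simp: mem_quad_iff)
  also have "\<dots> \<le> (K * L\<^sup>2 * B + 4 * C\<^sup>2 + 1) * breg r z"
    using breg_nonneg[OF r z(1)] by (simp add: algebra_simps)
  finally show ?thesis .
next
  case False
  have "\<bar>\<theta> (grad r) - \<theta> (grad z)\<bar> \<le> 2 * C"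
    using bounded[OF grad_mem_quad[OF r]] bounded[OF grad_mem_quad[OF z(1)]]
      abs_triangle_ineq4[of "\<theta> (grad r)" "\<theta> (grad z)"] by linarith
  then have "\<bar>\<theta> (grad r) - \<theta> (grad z)\<bar>\<^sup>2 \<le> (2 * C)\<^sup>2"
    by (rule power_mono) simp
  then have "(\<theta> (grad r) - \<theta> (grad z))\<^sup>2 \<le> 4 * C\<^sup>2"
    by (simp add: power_mult_distrib)
  moreover have "max (fst r) (snd r) \<le> breg r z"
    using far r z False by auto
  ultimately have "max (fst r) (snd r) * (\<theta> (grad r) - \<theta> (grad z))\<^sup>2 \<le> breg r z * (4 * C\<^sup>2)"
    using breg_nonneg[OF r z(1)] by (intro mult_mono) auto
  also have "\<dots> \<le> breg r z * (4 * C\<^sup>2) + (K * L\<^sup>2 * B + 1) * breg r z"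
    using breg_nonneg[OF r z(1)] \<open>0 \<le> H\<close> \<open>H \<le> K\<close> \<open>0 < B\<close> by simp
  also have "\<dots> = (K * L\<^sup>2 * B + 4 * C\<^sup>2 + 1) * breg r z"
    by (simp add: algebra_simps)
  finally show ?thesis .
qed

lemma weighted_difference_le_breg:
  fixes \<theta> :: "'i \<Rightarrow> real \<times> real \<Rightarrow> real"
  assumes growth: "\<exists>c>0. eventually (\<lambda>r. c \<le> f1'' r) at_top" "\<exists>c>0. eventually (\<lambda>r. c \<le> f2'' r) at_top"
    and "finite I" "0 \<le> H"
    and loclip: "\<And>k u. k \<in> I \<Longrightarrow> u \<in> quad \<Longrightarrow>
      \<exists>e>0. \<exists>L. L-lipschitz_on (cball u e \<inter> quad) (\<theta> k)"
    and bounded: "\<And>k u. k \<in> I \<Longrightarrow> u \<in> quad \<Longrightarrow> \<bar>\<theta> k u\<bar> \<le> C"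
  shows "\<exists>\<beta>>0. \<forall>k\<in>I. \<forall>z\<in>quad. \<forall>r\<in>quad. fst z \<le> H \<and> snd z \<le> H \<longrightarrow>
    max (fst r) (snd r) * (\<theta> k (grad r) - \<theta> k (grad z))\<^sup>2 \<le> \<beta> * breg r z"
proof -
  obtain K where "H \<le> K" and far: "\<forall>r\<in>quad. \<forall>z\<in>quad. fst z \<le> H \<and> snd z \<le> H \<and>
      K < max (fst r) (snd r) \<longrightarrow> max (fst r) (snd r) \<le> breg r z"
    using max_le_breg_far[OF growth \<open>0 \<le> H\<close>] by blast
  obtain B where "0 < B"
    and near: "\<forall>r\<in>{0..K} \<times> {0..K}. \<forall>z\<in>{0..K} \<times> {0..K}. (dist (grad r) (grad z))\<^sup>2 \<le> B * breg r z"
    using dist_grad_sq_le_breg by blast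
  let ?X = "grad ` ({0..K} \<times> {0..K})"
  have "{0..K} \<times> {0..K} \<subseteq> quad" by (auto simp: mem_quad_iff)
  then have "?X \<subseteq> quad" "compact ?X"
    using grad_mem_quad
    by (auto intro!: compact_continuous_image continuous_on_subset[OF continuous_on_grad] compact_Times)
  have "\<exists>e>0. \<exists>L. L-lipschitz_on (cball u e \<inter> ?X) (\<theta> k)" if k: "k \<in> I" and u: "u \<in> ?X" for k u
  proof -
    obtain e L where "0 < e" "L-lipschitz_on (cball u e \<inter> quad) (\<theta> k)"
      using loclip[OF k] u \<open>?X \<subseteq> quad\<close> by blast
    moreover have "cball u e \<inter> ?X \<subseteq> cball u e \<inter> quad"
      using \<open>?X \<subseteq> quad\<close> by blast
    ultimately show ?thesis
      using lipschitz_on_subset by blast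
  qed
  then obtain L where L: "\<forall>k\<in>I. L-lipschitz_on ?X (\<theta> k)"
    using uniform_lipschitz_on_compact[where \<theta> = \<theta>, OF \<open>finite I\<close> \<open>compact ?X\<close>] by blast
  have "0 < K * L\<^sup>2 * B + 4 * C\<^sup>2 + 1"
    using \<open>0 \<le> H\<close> \<open>H \<le> K\<close> \<open>0 < B\<close> by (simp add: add_nonneg_pos)
  then show ?thesis
    using weighted_difference_le_breg_explicit[OF \<open>0 \<le> H\<close> \<open>H \<le> K\<close> \<open>0 < B\<close> far near L[rule_format]]
      bounded by blast
qed

end

section \<open>The coupled energy\<close>

lemma le_mult_Min4:
  fixes t k a b c d :: real
  assumes "\<bar>t\<bar> \<le> k * Min {a, b, c, d}" "0 \<le> k"
  shows "\<bar>t\<bar> \<le> k * a" and "\<bar>t\<bar> \<le> k * d"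
proof -
  have "Min {a, b, c, d} \<le> a" "Min {a, b, c, d} \<le> d"
    by (simp_all add: Min_le_iff)
  then show "\<bar>t\<bar> \<le> k * a" "\<bar>t\<bar> \<le> k * d"
    using assms by (meson mult_left_mono order_trans)+
qed

locale coupled_energy =
  fixes F Fd Fdd :: "nat \<Rightarrow> real \<Rightarrow> real"
    and h :: "real \<times> real \<Rightarrow> real"
    and dh :: "nat \<Rightarrow> real \<times> real \<Rightarrow> real"
    and dhh :: "nat \<Rightarrow> nat \<Rightarrow> real \<times> real \<Rightarrow> real"
    and thd :: "nat \<Rightarrow> nat \<Rightarrow> real \<times> real \<Rightarrow> real"
    and \<kappa> :: "nat \<Rightarrow> nat \<Rightarrow> real"
  assumes profile: "j \<in> {1, 2} \<Longrightarrow> convex_profile (F j) (Fd j) (Fdd j)"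
    and h_deriv: "x \<in> quad \<Longrightarrow> (h has_derivative (\<lambda>v. dh 1 x * fst v + dh 2 x * snd v)) (at x within quad)"
    and dh_deriv: "j \<in> {1, 2} \<Longrightarrow> x \<in> quad \<Longrightarrow>
      (dh j has_derivative (\<lambda>v. dhh j 1 x * fst v + dhh j 2 x * snd v)) (at x within quad)"
    and dhh_cont: "i \<in> {1, 2} \<Longrightarrow> j \<in> {1, 2} \<Longrightarrow> continuous_on quad (dhh j i)"
    and h_vanish: "x \<in> quad \<Longrightarrow> fst x = 0 \<or> snd x = 0 \<Longrightarrow> h x = 0 \<and> dh 1 x = 0 \<and> dh 2 x = 0"
    and thd_deriv: "i \<in> {1, 2} \<Longrightarrow> j \<in> {1, 2} \<Longrightarrow> 0 < fst u \<Longrightarrow> 0 < snd u \<Longrightarrow>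
      ((\<lambda>t. theta dh Fd j (upd_coord i u t)) has_real_derivative thd j i u) (at (coord i u))"
    and kappa_pos: "i \<in> {1, 2} \<Longrightarrow> j \<in> {1, 2} \<Longrightarrow> 0 < \<kappa> j i"
    and thd_bound: "i \<in> {1, 2} \<Longrightarrow> j \<in> {1, 2} \<Longrightarrow> u \<in> quad \<Longrightarrow>
      \<bar>thd j i u\<bar> \<le> \<kappa> j i * Min {1, fst u, snd u,
        sqrt (inv_into {0..} (Fd i) (coord i u) / inv_into {0..} (Fd j) (coord j u))}"
begin

sublocale profile_pair "F 1" "Fd 1" "Fdd 1" "F 2" "Fd 2" "Fdd 2"
  using profile by (simp add: profile_pair_def)

(* The simplifier would rewrite the index 1 to Suc 0, and facts about F 1 from the
   sublocale would then no longer apply. *)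
declare One_nat_def [simp del]

lemma inv_Fd_coord_grad:
  assumes "j \<in> {1, 2}" "r \<in> quad"
  shows "inv_into {0..} (Fd j) (coord j (grad r)) = coord j r"
  using assms(2) by (cases rule: index_cases[OF assms(1)])
    (simp_all add: coord_def grad_def mem_quad_iff P1.inv_f'_f' P2.inv_f'_f')

lemma dh_at:
  assumes "j \<in> {1, 2}" "0 < fst x" "0 < snd x"
  shows "(dh j has_derivative (\<lambda>v. dhh j 1 x * fst v + dhh j 2 x * snd v)) (at x)"
proof -
  have "x \<in> interior quad" using assms(2,3) by (cases x) (simp add: interior_quad)
  then show ?thesis
    using dh_deriv[OF assms(1)] interior_subset at_within_interior by fastforce
qed

lemma h_at:
  assumes "0 < fst x" "0 < snd x"
  shows "(h has_derivative (\<lambda>v. dh 1 x * fst v + dh 2 x * snd v)) (at x)"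
proof -
  have "x \<in> interior quad" using assms by (cases x) (simp add: interior_quad)
  then show ?thesis
    using h_deriv interior_subset at_within_interior by fastforce
qed

lemma thd_grad_eq:
  assumes ij: "i \<in> {1, 2}" "j \<in> {1, 2}" and r: "0 < fst r" "0 < snd r"
  shows "thd j i (grad r) = dhh j i r / Fdd i (coord i r)"
proof -
  let ?G = "inv_into {0..} (Fd i)"
  have "r \<in> quad" "0 < coord i r" using r ij by (auto simp: mem_quad_iff coord_def)
  have theta_eq: "theta dh Fd j (upd_coord i (grad r) t) = dh j (upd_coord i r (?G t))" for t
    using \<open>r \<in> quad\<close> by (cases rule: index_cases[OF ij(1)])
      (simp_all add: theta_def upd_coord_def grad_def mem_quad_iff P1.inv_f'_f' P2.inv_f'_f')
  have "((\<lambda>s. dh j (upd_coord i r s)) has_real_derivative dhh j i r) (at (coord i r))"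
    using has_real_derivative_upd_coord[OF ij(1), of "dh j" "dhh j 1 r" "dhh j 2 r" r "coord i r" UNIV UNIV]
      dh_at[OF ij(2) r] ij by (auto simp: upd_coord_def coord_def)
  moreover have "(?G has_real_derivative inverse (Fdd i (coord i r))) (at (Fd i (coord i r)))"
    using convex_profile.inv_f'_deriv[OF profile[OF ij(1)] \<open>0 < coord i r\<close>] .
  moreover have "?G (Fd i (coord i r)) = coord i r"
    using convex_profile.inv_f'_f'[OF profile[OF ij(1)]] \<open>0 < coord i r\<close> by simp
  ultimately have "((\<lambda>t. dh j (upd_coord i r (?G t))) has_real_derivative dhh j i r * inverse (Fdd i (coord i r)))
      (at (Fd i (coord i r)))"
    using DERIV_chain2[of "\<lambda>s. dh j (upd_coord i r s)"] by metis
  moreover have "coord i (grad r) = Fd i (coord i r)"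
    using ij by (auto simp: coord_def grad_def)
  moreover have "0 < fst (grad r)" "0 < snd (grad r)"
    using r P1.f'_pos P2.f'_pos by (simp_all add: grad_def)
  ultimately show ?thesis
    using thd_deriv[OF ij, of "grad r"] DERIV_unique unfolding theta_eq by (simp add: field_simps)
qed

lemma thd_le_kappa: "i \<in> {1, 2} \<Longrightarrow> j \<in> {1, 2} \<Longrightarrow> u \<in> quad \<Longrightarrow> \<bar>thd j i u\<bar> \<le> \<kappa> j i"
  using le_mult_Min4(1)[OF thd_bound less_imp_le[OF kappa_pos]] by simp

lemma thd_grad_le:
  assumes "i \<in> {1, 2}" "j \<in> {1, 2}" "r \<in> quad"
  shows "\<bar>thd j i (grad r)\<bar> \<le> \<kappa> j i * sqrt (coord i r / coord j r)"
  using le_mult_Min4(2)[OF thd_bound[OF assms(1,2) grad_mem_quad[OF assms(3)]] less_imp_le[OF kappa_pos]]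
    assms by (simp add: inv_Fd_coord_grad)

lemma continuous_on_Fdd_coord: "j \<in> {1, 2} \<Longrightarrow> continuous_on quad (\<lambda>r. Fdd j (coord j r))"
  by (cases rule: index_cases)
    (auto simp: coord_def mem_quad_iff intro!: continuous_on_compose2[OF P1.f''_cont continuous_on_fst]
      continuous_on_compose2[OF P2.f''_cont continuous_on_snd])

lemma Fdd_nonneg: "j \<in> {1, 2} \<Longrightarrow> r \<in> quad \<Longrightarrow> 0 \<le> Fdd j (coord j r)"
  using convex_profile.f''_nonneg[OF profile] coord_mem_quad by blast

lemma dhh_diag_bound:
  assumes "j \<in> {1, 2}" "r \<in> quad"
  shows "\<bar>dhh j j r\<bar> \<le> \<kappa> j j * Fdd j (coord j r)"
proof -
  have "0 \<le> \<kappa> j j * Fdd j (coord j r) - \<bar>dhh j j r\<bar>"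
  proof (rule nonneg_on_quad_if_nonneg_on_interior[OF _ _ assms(2)])
    have "continuous_on quad (dhh j j)" using dhh_cont assms(1) by blast
    then show "continuous_on quad (\<lambda>r. \<kappa> j j * Fdd j (coord j r) - \<bar>dhh j j r\<bar>)"
      by (intro continuous_on_diff continuous_on_mult[OF continuous_on_const]
          continuous_on_Fdd_coord[OF assms(1)] continuous_on_rabs)
    fix a b :: real assume ab: "0 < a" "0 < b"
    then have pos: "0 < Fdd j (coord j (a, b))"
      using convex_profile.f''_pos[OF profile[OF assms(1)]] assms(1) by (auto simp: coord_def)
    have "dhh j j (a, b) = thd j j (grad (a, b)) * Fdd j (coord j (a, b))"
      using thd_grad_eq[OF assms(1,1), of "(a, b)"] ab pos by simp
    also have "\<bar>\<dots>\<bar> \<le> \<kappa> j j * Fdd j (coord j (a, b))"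
      using thd_le_kappa[OF assms(1,1) grad_mem_quad, of "(a, b)"] ab pos
      by (simp add: abs_mult mem_quad_iff mult_right_mono)
    finally show "0 \<le> \<kappa> j j * Fdd j (coord j (a, b)) - \<bar>dhh j j (a, b)\<bar>"
      by simp
  qed
  then show ?thesis by simp
qed

lemma dhh_symmetric:
  assumes "r \<in> quad"
  shows "dhh 1 2 r = dhh 2 1 r"
proof -
  have interior_eq: "dhh 1 2 (a, b) = dhh 2 1 (a, b)" if "0 < a" "0 < b" for a b
  proof -
    have int: "(a, b) \<in> interior quad" using that by (simp add: interior_quad)
    show ?thesis
    proof (rule mixed_derivatives_commute[of "interior quad" "(a, b)" h
          "\<lambda>y v. dh 1 y * fst v + dh 2 y * snd v" "(1, 0)" "\<lambda>y v. dhh 1 1 y * fst v + dhh 1 2 y * snd v"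
          "(0, 1)" "\<lambda>y v. dhh 2 1 y * fst v + dhh 2 2 y * snd v", simplified])
      show "(h has_derivative (\<lambda>v. dh 1 y * fst v + dh 2 y * snd v)) (at y)"
        "(dh 1 has_derivative (\<lambda>v. dhh 1 1 y * fst v + dhh 1 2 y * snd v)) (at y)"
        "(dh 2 has_derivative (\<lambda>v. dhh 2 1 y * fst v + dhh 2 2 y * snd v)) (at y)"
        if "y \<in> interior quad" for y
        using that h_at dh_at[of 1] dh_at[of 2] by (auto simp: interior_quad mem_Times_iff)
      show "isCont (dhh 1 2) (a, b)" "isCont (dhh 2 1) (a, b)"
        using continuous_on_interior[OF dhh_cont int] by simp_all
    qed (use int in simp_all)
  qed
  have "continuous_on quad (\<lambda>r. - (dhh 1 2 r - dhh 2 1 r)\<^sup>2)"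
    using dhh_cont[of 2 1] dhh_cont[of 1 2] by (intro continuous_intros) simp_all
  then have "0 \<le> - (dhh 1 2 r - dhh 2 1 r)\<^sup>2"
    by (rule nonneg_on_quad_if_nonneg_on_interior) (simp_all add: interior_eq assms)
  then show ?thesis by simp
qed

lemma dhh_offdiag_bound:
  assumes "r \<in> quad"
  shows "(dhh 1 2 r)\<^sup>2 \<le> \<kappa> 1 2 * \<kappa> 2 1 * Fdd 1 (fst r) * Fdd 2 (snd r)"
proof -
  have interior_bound: "(dhh 1 2 (a, b))\<^sup>2 \<le> \<kappa> 1 2 * \<kappa> 2 1 * Fdd 1 a * Fdd 2 b" if ab: "0 < a" "0 < b" for a b
  proof -
    let ?r = "(a, b)"
    have "?r \<in> quad" using ab by (simp add: mem_quad_iff)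
    have e12: "dhh 1 2 ?r = thd 1 2 (grad ?r) * Fdd 2 b"
      using thd_grad_eq[of 2 1 ?r] ab P2.f''_pos[of b] by (simp add: coord_def)
    have e21: "dhh 2 1 ?r = thd 2 1 (grad ?r) * Fdd 1 a"
      using thd_grad_eq[of 1 2 ?r] ab P1.f''_pos[of a] by (simp add: coord_def)
    have "\<bar>thd 1 2 (grad ?r)\<bar> * \<bar>thd 2 1 (grad ?r)\<bar> \<le> (\<kappa> 1 2 * sqrt (b / a)) * (\<kappa> 2 1 * sqrt (a / b))"
      using thd_grad_le[of 2 1 ?r] thd_grad_le[of 1 2 ?r] \<open>?r \<in> quad\<close> kappa_pos[of 2 1]
      by (intro mult_mono) (simp_all add: coord_def)
    also have "\<dots> = \<kappa> 1 2 * \<kappa> 2 1"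
      using ab by (simp add: real_sqrt_mult[symmetric])
    finally have "\<bar>thd 1 2 (grad ?r) * thd 2 1 (grad ?r)\<bar> \<le> \<kappa> 1 2 * \<kappa> 2 1"
      by (simp add: abs_mult)
    then have "thd 1 2 (grad ?r) * thd 2 1 (grad ?r) \<le> \<kappa> 1 2 * \<kappa> 2 1"
      by (rule order_trans[OF abs_ge_self])
    then have "thd 1 2 (grad ?r) * thd 2 1 (grad ?r) * (Fdd 1 a * Fdd 2 b) \<le> \<kappa> 1 2 * \<kappa> 2 1 * (Fdd 1 a * Fdd 2 b)"
      using ab P1.f''_pos[of a] P2.f''_pos[of b] by (intro mult_right_mono) simp_all
    moreover have "(dhh 1 2 ?r)\<^sup>2 = dhh 1 2 ?r * dhh 2 1 ?r"
      using dhh_symmetric[OF \<open>?r \<in> quad\<close>] by (simp add: power2_eq_square)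
    then have "(dhh 1 2 ?r)\<^sup>2 = thd 1 2 (grad ?r) * thd 2 1 (grad ?r) * (Fdd 1 a * Fdd 2 b)"
      unfolding e12 e21 by (simp add: algebra_simps)
    ultimately show ?thesis by (simp add: mult.assoc)
  qed
  have "continuous_on quad (\<lambda>r. \<kappa> 1 2 * \<kappa> 2 1 * Fdd 1 (fst r) * Fdd 2 (snd r) - (dhh 1 2 r)\<^sup>2)"
    using continuous_on_Fdd_coord[of 1] continuous_on_Fdd_coord[of 2] dhh_cont[of 2 1]
    by (intro continuous_intros) (simp_all add: coord_def)
  then have "0 \<le> \<kappa> 1 2 * \<kappa> 2 1 * Fdd 1 (fst r) * Fdd 2 (snd r) - (dhh 1 2 r)\<^sup>2"
    by (rule nonneg_on_quad_if_nonneg_on_interior) (simp_all add: interior_bound assms)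
  then show ?thesis by simp
qed

lemma derivatives_along_coordinate_line:
  assumes j: "j \<in> {1, 2}" and r: "r \<in> quad" and "0 \<le> t"
  shows "((\<lambda>t. h (upd_coord j r t)) has_real_derivative dh j (upd_coord j r t)) (at t within {0..})"
    and "((\<lambda>t. dh j (upd_coord j r t)) has_real_derivative dhh j j (upd_coord j r t)) (at t within {0..})"
proof -
  have line: "upd_coord j r t \<in> quad" if "t \<in> {0..}" for t
    using upd_coord_mem_quad[OF j r] that by simp
  have pick: "(if j = 1 then g 1 else g 2) = g j" for g :: "nat \<Rightarrow> real"
    by (cases rule: index_cases[OF j]) simp_all
  show "((\<lambda>t. h (upd_coord j r t)) has_real_derivative dh j (upd_coord j r t)) (at t within {0..})"
    using has_real_derivative_upd_coord[where T = "{0..}", OF j h_deriv[OF line[of t]] line] pick[of "\<lambda>i. dh i (upd_coord j r t)"]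
      \<open>0 \<le> t\<close> by simp
  show "((\<lambda>t. dh j (upd_coord j r t)) has_real_derivative dhh j j (upd_coord j r t)) (at t within {0..})"
    using has_real_derivative_upd_coord[where T = "{0..}", OF j dh_deriv[OF j line[of t]] line] pick[of "\<lambda>i. dhh j i (upd_coord j r t)"]
      \<open>0 \<le> t\<close> by simp
qed

lemma h_bound:
  assumes j: "j \<in> {1, 2}" and r: "r \<in> quad"
  shows "\<bar>h r\<bar> \<le> \<kappa> j j * F j (coord j r)"
proof -
  let ?c = "coord j r" and ?p = "upd_coord j r"
  have "0 \<le> ?c" using coord_mem_quad[OF j r] .
  have on_axis: "h (?p 0) = 0" "dh j (?p 0) = 0"
    using h_vanish[OF upd_coord_mem_quad[OF j r order_refl] upd_coord_0_on_axis] j by auto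
  have "0 \<le> \<kappa> j j * F j ?c + \<sigma> * h r" if \<sigma>: "\<bar>\<sigma>\<bar> = 1" for \<sigma>
  proof -
    have "(\<kappa> j j * F j 0 + \<sigma> * h (?p 0)) + (?c - 0) * (\<kappa> j j * Fd j 0 + \<sigma> * dh j (?p 0))
        \<le> \<kappa> j j * F j ?c + \<sigma> * h (?p ?c)"
    proof (rule DERIV2_nonneg_imp_above_tangent[OF \<open>0 \<le> ?c\<close>,
          where \<phi> = "\<lambda>t. \<kappa> j j * F j t + \<sigma> * h (?p t)"
          and \<phi>' = "\<lambda>t. \<kappa> j j * Fd j t + \<sigma> * dh j (?p t)"
          and \<phi>'' = "\<lambda>t. \<kappa> j j * Fdd j t + \<sigma> * dhh j j (?p t)"])
      fix t assume t: "t \<in> {0..?c}"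
      note along = derivatives_along_coordinate_line[OF j r, of t, THEN has_field_derivative_subset,
          of "{0..?c}"]
      show "((\<lambda>t. \<kappa> j j * F j t + \<sigma> * h (?p t)) has_real_derivative \<kappa> j j * Fd j t + \<sigma> * dh j (?p t))
          (at t within {0..?c})"
        using convex_profile.f_deriv_Icc[OF profile[OF j] order_refl t] along(1) t
        by (intro DERIV_add DERIV_cmult) auto
      show "((\<lambda>t. \<kappa> j j * Fd j t + \<sigma> * dh j (?p t)) has_real_derivative \<kappa> j j * Fdd j t + \<sigma> * dhh j j (?p t))
          (at t within {0..?c})"
        using convex_profile.f'_deriv_Icc[OF profile[OF j] order_refl t] along(2) t
        by (intro DERIV_add DERIV_cmult) auto
    next
      fix t assume "0 < t" "t < ?c"
      then have "\<bar>dhh j j (?p t)\<bar> \<le> \<kappa> j j * Fdd j t"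
        using dhh_diag_bound[OF j upd_coord_mem_quad[OF j r]] by simp
      then show "0 \<le> \<kappa> j j * Fdd j t + \<sigma> * dhh j j (?p t)"
        using \<sigma> by (auto simp: abs_if split: if_splits)
    qed
    then show ?thesis
      using on_axis convex_profile.f_0[OF profile[OF j]] convex_profile.f'_0[OF profile[OF j]] by simp
  qed
  from this[of 1] this[of "-1"] show ?thesis by (simp add: abs_le_iff)
qed

definition eps0 :: real where
  "eps0 = 1 / (4 * (\<kappa> 1 1 + \<kappa> 2 2 + \<kappa> 1 2 + \<kappa> 2 1))"

lemma eps0_pos: "0 < eps0"
  using kappa_pos[of 1 1] kappa_pos[of 2 2] kappa_pos[of 1 2] kappa_pos[of 2 1] by (simp add: eps0_def)

lemma eps0_small:
  assumes "0 \<le> \<epsilon>" "\<epsilon> \<le> eps0"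
  shows "j \<in> {1, 2} \<Longrightarrow> 4 * \<epsilon> * \<kappa> j j \<le> 1" and "16 * \<epsilon>\<^sup>2 * (\<kappa> 1 2 * \<kappa> 2 1) \<le> 1"
proof -
  define K where "K = \<kappa> 1 1 + \<kappa> 2 2 + \<kappa> 1 2 + \<kappa> 2 1"
  have \<kappa>: "0 < \<kappa> 1 1" "0 < \<kappa> 2 2" "0 < \<kappa> 1 2" "0 < \<kappa> 2 1"
    using kappa_pos by auto
  then have "0 < K" by (simp add: K_def)
  have "4 * \<epsilon> * K \<le> 4 * eps0 * K"
    using assms \<open>0 < K\<close> by simp
  also have "\<dots> = 1"
    using \<open>0 < K\<close> by (simp add: eps0_def K_def)
  finally have \<epsilon>K: "4 * \<epsilon> * K \<le> 1" .
  show "4 * \<epsilon> * \<kappa> j j \<le> 1" if "j \<in> {1, 2}"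
  proof -
    have "\<kappa> j j \<le> K" using that \<kappa> by (auto simp: K_def)
    then have "4 * \<epsilon> * \<kappa> j j \<le> 4 * \<epsilon> * K"
      using assms(1) by (intro mult_left_mono) simp_all
    then show ?thesis
      using \<epsilon>K by linarith
  qed
  have "\<kappa> 1 2 * \<kappa> 2 1 \<le> K * K"
    using \<kappa> by (intro mult_mono) (auto simp: K_def)
  then have "16 * \<epsilon>\<^sup>2 * (\<kappa> 1 2 * \<kappa> 2 1) \<le> 16 * \<epsilon>\<^sup>2 * (K * K)"
    by (intro mult_left_mono) simp_all
  also have "\<dots> = (4 * \<epsilon> * K)\<^sup>2"
    by (simp add: power2_eq_square)
  also have "\<dots> \<le> 1"
    using \<epsilon>K assms(1) \<open>0 < K\<close> by (simp add: power_le_one)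
  finally show "16 * \<epsilon>\<^sup>2 * (\<kappa> 1 2 * \<kappa> 2 1) \<le> 1" .
qed

lemma diagonal_entry_lower_bound:
  assumes "j \<in> {1, 2}" "r \<in> quad" "0 \<le> \<epsilon>" "\<epsilon> \<le> eps0"
  shows "Fdd j (coord j r) / 2 \<le> Fdd j (coord j r) + 2 * \<epsilon> * dhh j j r"
proof -
  have "2 * \<epsilon> * \<bar>dhh j j r\<bar> \<le> 2 * \<epsilon> * (\<kappa> j j * Fdd j (coord j r))"
    using dhh_diag_bound[OF assms(1,2)] assms(3) by (simp add: mult_left_mono)
  also have "\<dots> = (4 * \<epsilon> * \<kappa> j j) * Fdd j (coord j r) / 2"
    by simp
  also have "\<dots> \<le> Fdd j (coord j r) / 2"
    using mult_right_mono[OF eps0_small(1)[OF assms(3,4,1)] Fdd_nonneg[OF assms(1,2)]] by simp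
  finally have "2 * \<epsilon> * \<bar>dhh j j r\<bar> \<le> Fdd j (coord j r) / 2" .
  moreover have "- (2 * \<epsilon> * \<bar>dhh j j r\<bar>) \<le> 2 * \<epsilon> * dhh j j r"
    using mult_left_mono[OF abs_ge_minus_self[of "dhh j j r"], of "2 * \<epsilon>"] assms(3) by simp
  ultimately show ?thesis
    by linarith
qed

lemma energy_hessian_nonneg:
  assumes "r \<in> quad" "0 \<le> \<epsilon>" "\<epsilon> \<le> eps0"
  shows "0 \<le> fst v * ((Fdd 1 (fst r) + 2 * \<epsilon> * dhh 1 1 r) * fst v + 2 * \<epsilon> * dhh 1 2 r * snd v)
    + snd v * (2 * \<epsilon> * dhh 2 1 r * fst v + (Fdd 2 (snd r) + 2 * \<epsilon> * dhh 2 2 r) * snd v)"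
proof -
  let ?a = "Fdd 1 (fst r) + 2 * \<epsilon> * dhh 1 1 r" and ?b = "Fdd 2 (snd r) + 2 * \<epsilon> * dhh 2 2 r"
    and ?c = "2 * \<epsilon> * dhh 1 2 r"
  have a: "Fdd 1 (fst r) / 2 \<le> ?a" and b: "Fdd 2 (snd r) / 2 \<le> ?b"
    using diagonal_entry_lower_bound[OF _ assms, of 1] diagonal_entry_lower_bound[OF _ assms, of 2]
    by (simp_all add: coord_def)
  have F: "0 \<le> Fdd 1 (fst r)" "0 \<le> Fdd 2 (snd r)"
    using Fdd_nonneg[OF _ assms(1), of 1] Fdd_nonneg[OF _ assms(1), of 2] by (simp_all add: coord_def)
  have "?c\<^sup>2 = 4 * \<epsilon>\<^sup>2 * (dhh 1 2 r)\<^sup>2"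
    by (simp add: power_mult_distrib)
  also have "\<dots> \<le> 4 * \<epsilon>\<^sup>2 * (\<kappa> 1 2 * \<kappa> 2 1 * Fdd 1 (fst r) * Fdd 2 (snd r))"
    using dhh_offdiag_bound[OF assms(1)] by (simp add: mult_left_mono)
  also have "\<dots> = (16 * \<epsilon>\<^sup>2 * (\<kappa> 1 2 * \<kappa> 2 1)) * (Fdd 1 (fst r) / 2 * (Fdd 2 (snd r) / 2))"
    by (simp add: algebra_simps)
  also have "\<dots> \<le> Fdd 1 (fst r) / 2 * (Fdd 2 (snd r) / 2)"
    using mult_right_mono[OF eps0_small(2)[OF assms(2,3)], of "Fdd 1 (fst r) / 2 * (Fdd 2 (snd r) / 2)"] F
    by simp
  also have "\<dots> \<le> ?a * ?b"
    using a b F by (intro mult_mono) auto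
  finally have "0 \<le> ?a * (fst v)\<^sup>2 + 2 * ?c * fst v * snd v + ?b * (snd v)\<^sup>2"
    using a b F by (intro quadratic_form_nonneg) auto
  also have "\<dots> = fst v * (?a * fst v + ?c * snd v) + snd v * (2 * \<epsilon> * dhh 2 1 r * fst v + ?b * snd v)"
    unfolding dhh_symmetric[OF assms(1), symmetric] by (simp add: power2_eq_square algebra_simps)
  finally show ?thesis .
qed

lemma energy_convex:
  assumes "0 \<le> \<epsilon>" "\<epsilon> \<le> eps0"
  shows "convex_on quad (\<lambda>r. F 1 (fst r) + F 2 (snd r) + 2 * \<epsilon> * h r)"
proof (rule convex_on_if_hessian_nonneg[where fx = "\<lambda>r. Fd 1 (fst r) + 2 * \<epsilon> * dh 1 r"
      and fy = "\<lambda>r. Fd 2 (snd r) + 2 * \<epsilon> * dh 2 r"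
      and fxx = "\<lambda>r. Fdd 1 (fst r) + 2 * \<epsilon> * dhh 1 1 r" and fxy = "\<lambda>r. 2 * \<epsilon> * dhh 1 2 r"
      and fyx = "\<lambda>r. 2 * \<epsilon> * dhh 2 1 r" and fyy = "\<lambda>r. Fdd 2 (snd r) + 2 * \<epsilon> * dhh 2 2 r",
      OF convex_quad])
  fix x assume x: "x \<in> quad"
  have proj: "fst ` quad \<subseteq> {0..}" "snd ` quad \<subseteq> {0..}" by (auto simp: mem_quad_iff)
  have "0 \<le> fst x" "0 \<le> snd x" using x by (simp_all add: mem_quad_iff)
  note fst_comp = has_derivative_fst_compose[OF _ proj(1)] and snd_comp = has_derivative_snd_compose[OF _ proj(2)]
  have "((\<lambda>r. F 1 (fst r) + F 2 (snd r) + 2 * \<epsilon> * h r) has_derivative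
      (\<lambda>v. Fd 1 (fst x) * fst v + Fd 2 (snd x) * snd v + 2 * \<epsilon> * (dh 1 x * fst v + dh 2 x * snd v))) (at x within quad)"
    using \<open>0 \<le> fst x\<close> \<open>0 \<le> snd x\<close>
    by (intro has_derivative_add has_derivative_mult_right fst_comp snd_comp P1.f_deriv P2.f_deriv h_deriv[OF x])
  then show "((\<lambda>r. F 1 (fst r) + F 2 (snd r) + 2 * \<epsilon> * h r) has_derivative
      (\<lambda>v. (Fd 1 (fst x) + 2 * \<epsilon> * dh 1 x) * fst v + (Fd 2 (snd x) + 2 * \<epsilon> * dh 2 x) * snd v)) (at x within quad)"
    by (rule has_derivative_eq_rhs) (simp add: fun_eq_iff algebra_simps)
  have "((\<lambda>r. Fd 1 (fst r) + 2 * \<epsilon> * dh 1 r) has_derivative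
      (\<lambda>v. Fdd 1 (fst x) * fst v + 2 * \<epsilon> * (dhh 1 1 x * fst v + dhh 1 2 x * snd v))) (at x within quad)"
    using \<open>0 \<le> fst x\<close> by (intro has_derivative_add has_derivative_mult_right fst_comp P1.f'_deriv dh_deriv x) simp_all
  then show "((\<lambda>r. Fd 1 (fst r) + 2 * \<epsilon> * dh 1 r) has_derivative
      (\<lambda>v. (Fdd 1 (fst x) + 2 * \<epsilon> * dhh 1 1 x) * fst v + 2 * \<epsilon> * dhh 1 2 x * snd v)) (at x within quad)"
    by (rule has_derivative_eq_rhs) (simp add: fun_eq_iff algebra_simps)
  have "((\<lambda>r. Fd 2 (snd r) + 2 * \<epsilon> * dh 2 r) has_derivative
      (\<lambda>v. Fdd 2 (snd x) * snd v + 2 * \<epsilon> * (dhh 2 1 x * fst v + dhh 2 2 x * snd v))) (at x within quad)"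
    using \<open>0 \<le> snd x\<close> by (intro has_derivative_add has_derivative_mult_right snd_comp P2.f'_deriv dh_deriv x) simp_all
  then show "((\<lambda>r. Fd 2 (snd r) + 2 * \<epsilon> * dh 2 r) has_derivative
      (\<lambda>v. 2 * \<epsilon> * dhh 2 1 x * fst v + (Fdd 2 (snd x) + 2 * \<epsilon> * dhh 2 2 x) * snd v)) (at x within quad)"
    by (rule has_derivative_eq_rhs) (simp add: fun_eq_iff algebra_simps)
  show "0 \<le> fst v * ((Fdd 1 (fst x) + 2 * \<epsilon> * dhh 1 1 x) * fst v + 2 * \<epsilon> * dhh 1 2 x * snd v)
    + snd v * (2 * \<epsilon> * dhh 2 1 x * fst v + (Fdd 2 (snd x) + 2 * \<epsilon> * dhh 2 2 x) * snd v)" for v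
    by (rule energy_hessian_nonneg[OF x assms])
qed

lemma energy_strict_convex:
  assumes "0 \<le> \<epsilon>" "\<epsilon> < eps0"
  shows "strict_convex_on quad (\<lambda>r. F 1 (fst r) + F 2 (snd r) + 2 * \<epsilon> * h r)"
proof -
  define s where "s = \<epsilon> / eps0"
  have s: "0 \<le> s" "s < 1" using assms eps0_pos by (simp_all add: s_def)
  have "strict_convex_on quad (\<lambda>r. (1 - s) * (F 1 (fst r) + F 2 (snd r))
      + s * (F 1 (fst r) + F 2 (snd r) + 2 * eps0 * h r))"
    using s eps0_pos
    by (intro strict_convex_on_add_convex_on strict_convex_on_cmul strict_convex_on_sum convex_on_cmul
        energy_convex) simp_all
  moreover have "(1 - s) * (F 1 (fst r) + F 2 (snd r)) + s * (F 1 (fst r) + F 2 (snd r) + 2 * eps0 * h r)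
      = F 1 (fst r) + F 2 (snd r) + 2 * \<epsilon> * h r" for r
    using eps0_pos by (simp add: s_def algebra_simps)
  ultimately show ?thesis by simp
qed

lemma energy_bounds:
  assumes "r \<in> quad" "0 \<le> \<epsilon>" "\<epsilon> \<le> eps0"
  shows "F 1 (fst r) / 2 + F 2 (snd r) / 2 \<le> F 1 (fst r) + F 2 (snd r) + \<epsilon> * h r \<and>
    F 1 (fst r) + F 2 (snd r) + \<epsilon> * h r \<le> (1 + \<epsilon> / 2 * \<kappa> 1 1) * F 1 (fst r) + (1 + \<epsilon> / 2 * \<kappa> 2 2) * F 2 (snd r)"
proof
  have h1: "\<bar>h r\<bar> \<le> \<kappa> 1 1 * F 1 (fst r)" and h2: "\<bar>h r\<bar> \<le> \<kappa> 2 2 * F 2 (snd r)"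
    using h_bound[of 1 r] h_bound[of 2 r] assms(1) by (simp_all add: coord_def)
  have F: "0 \<le> F 1 (fst r)" "0 \<le> F 2 (snd r)"
    using P1.f_nonneg P2.f_nonneg assms(1) by (simp_all add: mem_quad_iff)
  have "\<epsilon> * \<bar>h r\<bar> \<le> (4 * \<epsilon> * \<kappa> 1 1) * F 1 (fst r) / 4"
    using mult_left_mono[OF h1 assms(2)] by simp
  also have "\<dots> \<le> F 1 (fst r) / 4"
    using mult_right_mono[OF eps0_small(1)[OF assms(2,3), of 1] F(1)] by simp
  finally have "\<epsilon> * \<bar>h r\<bar> \<le> F 1 (fst r) / 4" .
  moreover have "- (\<epsilon> * \<bar>h r\<bar>) \<le> \<epsilon> * h r"
    using mult_left_mono[OF abs_ge_minus_self[of "h r"] assms(2)] by simp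
  ultimately show "F 1 (fst r) / 2 + F 2 (snd r) / 2 \<le> F 1 (fst r) + F 2 (snd r) + \<epsilon> * h r"
    using F by linarith
  have "2 * h r \<le> \<kappa> 1 1 * F 1 (fst r) + \<kappa> 2 2 * F 2 (snd r)"
    using h1 h2 abs_ge_self[of "h r"] by linarith
  then have "h r \<le> (\<kappa> 1 1 * F 1 (fst r) + \<kappa> 2 2 * F 2 (snd r)) / 2"
    by simp
  then have "\<epsilon> * h r \<le> \<epsilon> * ((\<kappa> 1 1 * F 1 (fst r) + \<kappa> 2 2 * F 2 (snd r)) / 2)"
    by (rule mult_left_mono) (rule assms(2))
  then show "F 1 (fst r) + F 2 (snd r) + \<epsilon> * h r
      \<le> (1 + \<epsilon> / 2 * \<kappa> 1 1) * F 1 (fst r) + (1 + \<epsilon> / 2 * \<kappa> 2 2) * F 2 (snd r)"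
    by (simp add: algebra_simps)
qed

lemma energy_convex_and_bounded:
  "\<exists>\<epsilon>0>0.
    (\<forall>\<epsilon>. 0 < \<epsilon> \<and> \<epsilon> \<le> \<epsilon>0 \<longrightarrow>
       convex_on quad (\<lambda>r. F 1 (fst r) + F 2 (snd r) + 2 * \<epsilon> * h r) \<and>
       (\<epsilon> < \<epsilon>0 \<longrightarrow> strict_convex_on quad (\<lambda>r. F 1 (fst r) + F 2 (snd r) + 2 * \<epsilon> * h r)))
    \<and> (\<forall>r\<in>quad. \<forall>\<epsilon>. 0 < \<epsilon> \<and> \<epsilon> \<le> \<epsilon>0 \<longrightarrow>
       F 1 (fst r) / 2 + F 2 (snd r) / 2 \<le> F 1 (fst r) + F 2 (snd r) + \<epsilon> * h r \<and>
       F 1 (fst r) + F 2 (snd r) + \<epsilon> * h r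
         \<le> (1 + \<epsilon> / 2 * \<kappa> 1 1) * F 1 (fst r) + (1 + \<epsilon> / 2 * \<kappa> 2 2) * F 2 (snd r))"
  using eps0_pos energy_convex energy_strict_convex energy_bounds by (intro exI[of _ eps0]) auto

lemma thd_bounded:
  assumes "i \<in> {1, 2}" "j \<in> {1, 2}" "u \<in> quad"
  shows "\<bar>thd j i u\<bar> \<le> \<kappa> 1 1 + \<kappa> 1 2 + \<kappa> 2 1 + \<kappa> 2 2"
proof -
  have "\<kappa> j i \<le> \<kappa> 1 1 + \<kappa> 1 2 + \<kappa> 2 1 + \<kappa> 2 2"
    using assms(1,2) kappa_pos[of 1 1] kappa_pos[of 1 2] kappa_pos[of 2 1] kappa_pos[of 2 2] by auto
  then show ?thesis
    using thd_le_kappa[OF assms] by linarith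
qed

lemma thd_weighted_difference_le_bregman:
  assumes growth: "\<And>j. j \<in> {1, 2} \<Longrightarrow> \<exists>c>0. eventually (\<lambda>r. c \<le> Fdd j r) at_top"
    and loclip: "\<And>i j u. i \<in> {1, 2} \<Longrightarrow> j \<in> {1, 2} \<Longrightarrow> u \<in> quad \<Longrightarrow>
      \<exists>e>0. \<exists>L. L-lipschitz_on (cball u e \<inter> quad) (thd j i)"
    and "0 < H"
  shows "\<exists>\<beta>>0. \<forall>z\<in>quad. \<forall>r\<in>quad. \<forall>i\<in>{1, 2}. \<forall>j\<in>{1, 2}. fst z \<le> H \<and> snd z \<le> H \<longrightarrow>
    max (fst r) (snd r) * (thd j i (Fd 1 (fst r), Fd 2 (snd r)) - thd j i (Fd 1 (fst z), Fd 2 (snd z)))\<^sup>2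
      \<le> \<beta> * (bregman (F 1) (Fd 1) (fst r) (fst z) + bregman (F 2) (Fd 2) (snd r) (snd z))"
proof -
  let ?I = "{1, 2} \<times> {1, 2 :: nat}"
  have loclip': "\<exists>e>0. \<exists>L. L-lipschitz_on (cball u e \<inter> quad) (thd (fst k) (snd k))"
    if "k \<in> ?I" "u \<in> quad" for k u
    using loclip[of "snd k" "fst k" u] that by (auto simp: mem_Times_iff)
  have bounded': "\<bar>thd (fst k) (snd k) u\<bar> \<le> \<kappa> 1 1 + \<kappa> 1 2 + \<kappa> 2 1 + \<kappa> 2 2"
    if "k \<in> ?I" "u \<in> quad" for k u
    using thd_bounded[of "snd k" "fst k" u] that by (auto simp: mem_Times_iff)
  obtain \<beta> where "0 < \<beta>" and \<beta>: "\<forall>k\<in>?I. \<forall>z\<in>quad. \<forall>r\<in>quad. fst z \<le> H \<and> snd z \<le> H \<longrightarrow>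
      max (fst r) (snd r) * (thd (fst k) (snd k) (grad r) - thd (fst k) (snd k) (grad z))\<^sup>2 \<le> \<beta> * breg r z"
    using weighted_difference_le_breg[where \<theta> = "\<lambda>k. thd (fst k) (snd k)" and I = ?I and H = H,
        OF growth[of 1] growth[of 2] _ less_imp_le[OF \<open>0 < H\<close>] loclip' bounded']
    by auto
  then show ?thesis
    using \<open>0 < \<beta>\<close> by (intro exI[of _ \<beta>]) (auto simp: grad_def breg_def)
qed

end

theorem proposition2p4:
  fixes F Fd Fdd :: "nat \<Rightarrow> real \<Rightarrow> real"
    and m M \<beta> :: "nat \<Rightarrow> real" and r0 :: real
    and h :: "real \<times> real \<Rightarrow> real"
    and dh :: "nat \<Rightarrow> real \<times> real \<Rightarrow> real"
    and dhh :: "nat \<Rightarrow> nat \<Rightarrow> real \<times> real \<Rightarrow> real"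
    and thd :: "nat \<Rightarrow> nat \<Rightarrow> real \<times> real \<Rightarrow> real"
    and \<kappa> :: "nat \<Rightarrow> nat \<Rightarrow> real"
  assumes
    \<comment> \<open>(F)\<close>
    F_nonneg: "\<forall>j\<in>{1,2}. \<forall>r\<ge>0. F j r \<ge> 0"
    and F_deriv: "\<forall>j\<in>{1,2}. \<forall>r\<ge>0. (F j has_real_derivative Fd j r) (at r within {0..})"
    and Fd_deriv: "\<forall>j\<in>{1,2}. \<forall>r\<ge>0. (Fd j has_real_derivative Fdd j r) (at r within {0..})"
    and Fdd_cont: "\<forall>j\<in>{1,2}. continuous_on {0..} (Fdd j)"
    and Fdd_pos: "\<forall>j\<in>{1,2}. \<forall>r>0. Fdd j r > 0"
    and F_zero: "\<forall>j\<in>{1,2}. F j 0 = 0 \<and> Fd j 0 = 0"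
    and Fdd_liminf: "\<forall>j\<in>{1,2}. \<exists>c>0. eventually (\<lambda>r. Fdd j r \<ge> c) at_top"
    and Fd_F_limsup: "\<forall>j\<in>{1,2}. \<exists>C. eventually (\<lambda>r. Fd j r / F j r \<le> C) at_top"
    and r0_pos: "r0 > 0"
    and mM_pos: "\<forall>j\<in>{1,2}. m j > 0 \<and> M j > 0 \<and> \<beta> j \<ge> 0"
    and Fdd_local: "\<forall>j\<in>{1,2}. \<forall>r. 0 \<le> r \<and> r \<le> r0 \<longrightarrow>
                       m j * rpow r (\<beta> j) \<le> Fdd j r \<and> Fdd j r \<le> M j * rpow r (\<beta> j)"
    and F_ineq: "\<forall>j\<in>{1,2}. \<forall>r\<ge>0. F j r - r * Fd j r + r\<^sup>2 * Fdd j r \<ge> 0"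
    \<comment> \<open>(h): C^2 on the closed quadrant, dh j = partial_{r_j} h, dhh j i = partial_{r_i} partial_{r_j} h\<close>
    and h_deriv: "\<forall>x\<in>quad. (h has_derivative (\<lambda>v. dh 1 x * fst v + dh 2 x * snd v)) (at x within quad)"
    and hd_deriv: "\<forall>j\<in>{1,2}. \<forall>x\<in>quad.
                     (dh j has_derivative (\<lambda>v. dhh j 1 x * fst v + dhh j 2 x * snd v)) (at x within quad)"
    and hdd_cont: "\<forall>i\<in>{1,2}. \<forall>j\<in>{1,2}. continuous_on quad (dhh j i)"
    and h_vanish: "\<forall>x\<in>quad. fst x = 0 \<or> snd x = 0 \<longrightarrow> h x = 0 \<and> dh 1 x = 0 \<and> dh 2 x = 0"
    \<comment> \<open>theta_{j,i} = partial_{u_i} theta_j (in the open quadrant; boundary values by continuity)\<close>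
    and thd_deriv: "\<forall>i\<in>{1,2}. \<forall>j\<in>{1,2}. \<forall>u. fst u > 0 \<and> snd u > 0 \<longrightarrow>
                     ((\<lambda>t. theta dh Fd j (upd_coord i u t)) has_real_derivative thd j i u) (at (coord i u))"
    \<comment> \<open>(theta)\<close>
    and thd_loclip: "\<forall>i\<in>{1,2}. \<forall>j\<in>{1,2}. \<forall>u\<in>quad. \<exists>e>0. \<exists>L. L-lipschitz_on (cball u e \<inter> quad) (thd j i)"
    and kappa_pos: "\<forall>i\<in>{1,2}. \<forall>j\<in>{1,2}. \<kappa> j i > 0"
    and thd_bound: "\<forall>i\<in>{1,2}. \<forall>j\<in>{1,2}. \<forall>u\<in>quad.
        \<bar>thd j i u\<bar> \<le> \<kappa> j i * Min {1, fst u, snd u,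
            sqrt (inv_into {0..} (Fd i) (coord i u) / inv_into {0..} (Fd j) (coord j u))}"
  shows
    "(\<exists>\<epsilon>0>0.
        (\<forall>\<epsilon>. 0 < \<epsilon> \<and> \<epsilon> \<le> \<epsilon>0 \<longrightarrow>
           convex_on quad (\<lambda>r. F 1 (fst r) + F 2 (snd r) + 2 * \<epsilon> * h r) \<and>
           (\<epsilon> < \<epsilon>0 \<longrightarrow> strict_convex_on quad (\<lambda>r. F 1 (fst r) + F 2 (snd r) + 2 * \<epsilon> * h r)))
      \<and> (\<forall>r\<in>quad. \<forall>\<epsilon>. 0 < \<epsilon> \<and> \<epsilon> \<le> \<epsilon>0 \<longrightarrow>
           F 1 (fst r) / 2 + F 2 (snd r) / 2 \<le> F 1 (fst r) + F 2 (snd r) + \<epsilon> * h r \<and>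
           F 1 (fst r) + F 2 (snd r) + \<epsilon> * h r
             \<le> (1 + \<epsilon> / 2 * \<kappa> 1 1) * F 1 (fst r) + (1 + \<epsilon> / 2 * \<kappa> 2 2) * F 2 (snd r)))
   \<and> (\<forall>j\<in>{1,2}. \<forall>r. 0 \<le> r \<and> r \<le> r0 \<longrightarrow>
        m j / (\<beta> j + 1) * r powr (\<beta> j + 1) \<le> Fd j r \<and>
        Fd j r \<le> M j / (\<beta> j + 1) * r powr (\<beta> j + 1) \<and>
        m j / ((\<beta> j + 1) * (\<beta> j + 2)) * r powr (\<beta> j + 2) \<le> F j r \<and>
        F j r \<le> M j / ((\<beta> j + 1) * (\<beta> j + 2)) * r powr (\<beta> j + 2))
   \<and> (\<forall>j\<in>{1,2}. \<exists>\<alpha>. \<forall>r\<ge>0. Fd j r \<le> \<alpha> * (min 1 r + F j r))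
   \<and> (\<forall>H>0. \<exists>\<beta>H>0. \<forall>rb\<in>quad. \<forall>r\<in>quad. \<forall>i\<in>{1,2}. \<forall>j\<in>{1,2}.
        fst rb \<le> H \<and> snd rb \<le> H \<longrightarrow>
        max (fst r) (snd r) * (thd j i (Fd 1 (fst r), Fd 2 (snd r)) - thd j i (Fd 1 (fst rb), Fd 2 (snd rb)))\<^sup>2
          \<le> \<beta>H * (bregman (F 1) (Fd 1) (fst r) (fst rb) + bregman (F 2) (Fd 2) (snd r) (snd rb)))"
proof -
  have profile: "convex_profile (F j) (Fd j) (Fdd j)" if "j \<in> {1, 2}" for j
    using that by unfold_locales (simp_all add: F_deriv Fd_deriv Fdd_cont Fdd_pos F_zero)
  interpret coupled_energy F Fd Fdd h dh dhh thd \<kappa>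
    unfolding coupled_energy_def
    using profile h_deriv hd_deriv hdd_cont h_vanish thd_deriv kappa_pos thd_bound by simp
  show ?thesis
    by (intro conjI)
      (fact energy_convex_and_bounded,
        use convex_profile.f'_f_powr_bounds[OF profile] mM_pos Fdd_local in blast,
        use convex_profile.f'_le_min_plus_f[OF profile] Fd_F_limsup in blast,
        use thd_weighted_difference_le_bregman[OF Fdd_liminf[rule_format] thd_loclip[rule_format]] in blast)
qed

end
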